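(* With $u,v,\Delta$ as in the context: (i) $u$ is strictly increasing from $[0,1)$ onto $[9/16,\,2/\pi)$; (ii) $\Delta$ is strictly increasing from $(0,1)$ onto $(0,+\infty)$; (iii) the function $w_+(x)=\frac12\log(1-x)+\frac{v(x)+\sqrt{\Delta(x)}}{2u(x)}$, defined on $[0,1)$, extends to a continuous function on $[0,1]$ with $w_+(0)=4/3$ and $w_+(1)=\log4$; consequently it attains a maximum $a_c$, and $a_c\ge\log 4$; (iv) the function $w_-(x)=\frac12\log(1-x)+\frac{v(x)-\sqrt{\Delta(x)}}{2u(x)}$ is continuous on $[0,1)$ with $w_-(0)=4/3$ and $\lim_{x\to1^-}w_-(x)=-\infty$.
   Context: ${}_2F_1$ denotes the Gauss hypergeometric function. For $x\in[0,1)$: $u(x)=\frac1{16}(1-x)\,{}_2F_1(3/2,3/2;3;x)+\frac12\,{}_2F_1(1/2,1/2;2;x)$, $v(x)=\frac12\,{}_2F_1(1/2,1/2;2;x)+{}_2F_1(1/2,1/2;1;x)$, $\Delta(x)=v(x)^2-4u(x)\,{}_2F_1(1/2,1/2;1;x)$. *)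

theory Defs
  imports "HOL-Analysis.Analysis"
begin

definition hyp2F1 :: "real \<Rightarrow> real \<Rightarrow> real \<Rightarrow> real \<Rightarrow> real" where
  "hyp2F1 a b c x =
     (\<Sum>n. pochhammer a n * pochhammer b n / (pochhammer c n * fact n) * x ^ n)"

definition u_fun :: "real \<Rightarrow> real" where
  "u_fun x = 1/16 * (1 - x) * hyp2F1 (3/2) (3/2) 3 x + 1/2 * hyp2F1 (1/2) (1/2) 2 x"

definition v_fun :: "real \<Rightarrow> real" where
  "v_fun x = 1/2 * hyp2F1 (1/2) (1/2) 2 x + hyp2F1 (1/2) (1/2) 1 x"

definition Delta_fun :: "real \<Rightarrow> real" where
  "Delta_fun x = (v_fun x)^2 - 4 * u_fun x * hyp2F1 (1/2) (1/2) 1 x"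

definition w_plus :: "real \<Rightarrow> real" where
  "w_plus x = 1/2 * ln (1 - x) + (v_fun x + sqrt (Delta_fun x)) / (2 * u_fun x)"

definition w_minus :: "real \<Rightarrow> real" where
  "w_minus x = 1/2 * ln (1 - x) + (v_fun x - sqrt (Delta_fun x)) / (2 * u_fun x)"

end

theory Submission
  imports Defs "HOL-Real_Asymp.Real_Asymp"
begin

text \<open>All functions involved are power series with explicit coefficients built from
  \<open>a\<^sub>n = (1/2)\<^sub>n / n!\<close>. The series of \<open>u\<close> has positive coefficients, and Wallis' product
  shows that they sum to \<open>2/\<pi>\<close>. With \<open>F = \<^sub>2F\<^sub>1(1/2, 1/2; 1; x)\<close>, the discriminant
  \<open>\<Delta> = v\<^sup>2 - 4 u F\<close> is a double power series with nonnegative coefficients, hence increasing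
  from \<open>\<Delta>(0) = 0\<close>, and unbounded because \<open>F\<close> has a logarithmic singularity at \<open>1\<close>.

  The limits at \<open>1\<close> rest on the sharp asymptotics \<open>F(x) + ln(1 - x)/\<pi> \<rightarrow> 4 ln 2 / \<pi>\<close>. Its
  constant is \<open>1 - \<Sum> (1/(\<pi> n) - a\<^sub>n\<^sup>2)\<close>, obtained by differentiating at \<open>\<epsilon> = 0\<close> the value
  \<open>\<Gamma>(1+\<epsilon>)\<^sup>2 / (\<epsilon> \<Gamma>(1/2+\<epsilon>)\<^sup>2)\<close> of \<open>\<^sub>2F\<^sub>1(1/2, 1/2; 1+\<epsilon>; 1)\<close> given by Gauss's summation theorem.
  Writing \<open>(v + \<surd>\<Delta>)/(2u) = v/u - 2F/(v + \<surd>\<Delta>)\<close> then yields \<open>w\<^sub>+ \<rightarrow> ln 4\<close>, while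
  \<open>v - \<surd>\<Delta> = 4uF/(v + \<surd>\<Delta>) \<le> 4u\<close> forces \<open>w\<^sub>- \<rightarrow> -\<infinity>\<close>.\<close>

section \<open>Central binomial coefficients and Wallis' product\<close>

definition central_coeff :: "nat \<Rightarrow> real" where
  "central_coeff n = pochhammer (1/2) n / fact n"

lemma central_coeff_0 [simp]: "central_coeff 0 = 1"
  by (simp add: central_coeff_def)

lemma central_coeff_Suc: "central_coeff (Suc n) = central_coeff n * (real n + 1/2) / (real n + 1)"
  unfolding central_coeff_def by (simp add: pochhammer_Suc field_simps)

lemma central_coeff_1 [simp]: "central_coeff (Suc 0) = 1/2"
  using central_coeff_Suc[of 0] by simp

lemma central_coeff_pos: "central_coeff n > 0"
  by (induction n) (auto simp: central_coeff_Suc)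

lemma central_coeff_le_1: "central_coeff n \<le> 1"
proof (induction n)
  case (Suc n)
  have "central_coeff (Suc n) = central_coeff n * ((real n + 1/2) / (real n + 1))"
    by (simp add: central_coeff_Suc)
  also have "\<dots> \<le> 1 * 1"
    using Suc central_coeff_pos[of n] by (intro mult_mono) auto
  finally show ?case by simp
qed simp

lemma central_coeff_sq_le_1: "central_coeff n ^ 2 \<le> 1"
  using central_coeff_le_1[of n] central_coeff_pos[of n] by (simp add: power_le_one)

lemma wallis_partial_product:
  "(\<Prod>k=1..n. 4 * real k ^ 2 / (4 * real k ^ 2 - 1)) = 1 / ((2 * real n + 1) * central_coeff n ^ 2)"
proof (induction n)
  case (Suc n)
  have "(\<Prod>k=1..Suc n. 4 * real k ^ 2 / (4 * real k ^ 2 - 1)) =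
      (\<Prod>k=1..n. 4 * real k ^ 2 / (4 * real k ^ 2 - 1)) * (4 * real (Suc n) ^ 2 / (4 * real (Suc n) ^ 2 - 1))"
    by (simp add: prod.nat_ivl_Suc')
  also have "\<dots> = 1 / ((2 * real (Suc n) + 1) * central_coeff (Suc n) ^ 2)"
    unfolding Suc central_coeff_Suc using central_coeff_pos[of n]
    by (simp add: field_simps power2_eq_square)
  finally show ?case .
qed simp

lemma wallis_partial_product_le: "(\<Prod>k=1..n. 4 * real k ^ 2 / (4 * real k ^ 2 - 1)) \<le> pi / 2"
proof (rule incseq_le[OF incseq_SucI wallis])
  fix m
  let ?P = "\<lambda>n. \<Prod>k=1..n. 4 * real k ^ 2 / (4 * real k ^ 2 - 1)"
  have "0 \<le> ?P m"
  proof (intro prod_nonneg divide_nonneg_nonneg)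
    fix k assume "k \<in> {1..m}"
    then have "1 \<le> real k ^ 2" by (simp add: one_le_power)
    then show "0 \<le> 4 * real k ^ 2 - 1" by simp
  qed simp
  moreover have "1 \<le> 4 * real (Suc m) ^ 2 / (4 * real (Suc m) ^ 2 - 1)"
  proof -
    have "1 \<le> real (Suc m) ^ 2" by (rule one_le_power) simp
    then show ?thesis by (subst le_divide_eq_1) linarith
  qed
  ultimately have "?P m * 1 \<le> ?P m * (4 * real (Suc m) ^ 2 / (4 * real (Suc m) ^ 2 - 1))"
    by (intro mult_left_mono) auto
  then show "?P m \<le> ?P (Suc m)"
    by (simp add: prod.nat_ivl_Suc')
qed

lemma central_coeff_sq_lower: "2 / pi \<le> (2 * real n + 1) * central_coeff n ^ 2"
proof -
  have "1 / ((2 * real n + 1) * central_coeff n ^ 2) \<le> pi / 2"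
    using wallis_partial_product_le[of n] unfolding wallis_partial_product .
  moreover have "(2 * real n + 1) * central_coeff n ^ 2 > 0"
    using central_coeff_pos[of n] by simp
  ultimately show ?thesis
    by (simp add: field_simps)
qed

lemma tendsto_central_coeff_sq: "(\<lambda>n. real n * central_coeff n ^ 2) \<longlonglongrightarrow> 1 / pi"
proof -
  have "(\<lambda>n. inverse (\<Prod>k=1..n. 4 * real k ^ 2 / (4 * real k ^ 2 - 1))) \<longlonglongrightarrow> inverse (pi / 2)"
    by (intro tendsto_inverse wallis) simp
  then have "(\<lambda>n. (2 * real n + 1) * central_coeff n ^ 2) \<longlonglongrightarrow> 2 / pi"
    unfolding wallis_partial_product by simp
  then have "(\<lambda>n. real n / (2 * real n + 1) * ((2 * real n + 1) * central_coeff n ^ 2))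
      \<longlonglongrightarrow> 1/2 * (2 / pi)"
    by (intro tendsto_mult) real_asymp
  moreover have "(\<lambda>n. real n / (2 * real n + 1) * ((2 * real n + 1) * central_coeff n ^ 2)) =
      (\<lambda>n. real n * central_coeff n ^ 2)"
    by (rule ext) (simp add: field_simps add_pos_pos)
  ultimately show ?thesis
    by simp
qed

lemma central_coeff_sq_upper: "real n * central_coeff n ^ 2 \<le> 1 / pi"
proof (cases n)
  case (Suc m)
  let ?B = "\<lambda>n. real (Suc n) * central_coeff (Suc n) ^ 2"
  have "incseq ?B"
  proof (rule incseq_SucI)
    fix m
    have step: "central_coeff (Suc (Suc m)) = central_coeff (Suc m) * (real m + 3/2) / (real m + 2)"
      using central_coeff_Suc[of "Suc m"] by (simp add: algebra_simps)
    have "?B (Suc m) = ?B m * ((real m + 3/2) ^ 2 / ((real m + 2) * (real m + 1)))"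
      unfolding step by (simp add: divide_simps power2_eq_square) (simp add: algebra_simps)
    moreover have "1 \<le> (real m + 3/2) ^ 2 / ((real m + 2) * (real m + 1))"
      by (simp add: le_divide_eq_1 power2_eq_square algebra_simps add_pos_nonneg)
    ultimately show "?B m \<le> ?B (Suc m)"
      by (metis mult.right_neutral mult_left_mono of_nat_0_le_iff zero_le_mult_iff zero_le_power2)
  qed
  then show ?thesis
    using incseq_le[OF _ LIMSEQ_Suc[OF tendsto_central_coeff_sq], of m] Suc by simp
qed simp

lemma central_coeff_sq_le: "central_coeff n ^ 2 \<le> 2 / (real n + 1)"
proof (cases n)
  case (Suc m)
  have "central_coeff n ^ 2 \<le> (1 / pi) / real n"
    using central_coeff_sq_upper[of n] Suc by (simp add: pos_le_divide_eq mult_ac)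
  also have "\<dots> \<le> (1 / 3) / real n"
    using Suc pi_gt3 by (intro divide_right_mono) (auto simp: field_simps)
  also have "\<dots> \<le> 2 / (real n + 1)"
    using Suc by (simp add: field_simps)
  finally show ?thesis .
qed simp

lemma summable_inverse_Suc_sq: "summable (\<lambda>n. 1 / (real n + 1) ^ 2)"
proof -
  have "summable (\<lambda>n. inverse (real n ^ 2))"
    by (rule inverse_power_summable) simp
  then have "summable (\<lambda>n. inverse (real (Suc n) ^ 2))"
    by (subst summable_Suc_iff)
  then show ?thesis
    by (simp add: field_simps)
qed


section \<open>Gauss's summation of \<open>\<^sub>2F\<^sub>1(1/2, 1/2; c; 1)\<close>\<close>

lemma summable_Suc_mult_tendsto_0:
  fixes t :: "nat \<Rightarrow> real"
  assumes "summable t" "\<And>n. 0 \<le> t n" "(\<lambda>n. real (Suc n) * t n) \<longlonglongrightarrow> L"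
  shows "L = 0"
proof (rule ccontr)
  assume "L \<noteq> 0"
  moreover have "L \<ge> 0"
    using LIMSEQ_le_const[OF assms(3), of 0] assms(2) by simp
  ultimately have "L > 0" by simp
  then have "eventually (\<lambda>n. real (Suc n) * t n > L / 2) sequentially"
    using order_tendstoD(1)[OF assms(3), of "L / 2"] by simp
  then have "eventually (\<lambda>n. norm ((L / 2) * inverse (real (Suc n))) \<le> t n) sequentially"
    by eventually_elim (use \<open>L > 0\<close> in \<open>simp add: field_simps\<close>)
  then have "summable (\<lambda>n. (L / 2) * inverse (real (Suc n)))"
    by (rule summable_comparison_test_ev[OF _ assms(1)])
  then have "summable (\<lambda>n. inverse (real (Suc n)))"
    using \<open>L > 0\<close> summable_cmult_iff[of "L / 2"] by simp
  then show False
    using not_summable_harmonic[where 'a=real] summable_Suc_iff[of "\<lambda>n. inverse (real n)"] by simp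
qed

text \<open>The terms of \<open>\<^sub>2F\<^sub>1(1/2, 1/2; c; 1)\<close>.\<close>

definition gauss_term :: "real \<Rightarrow> nat \<Rightarrow> real" where
  "gauss_term c n = central_coeff n ^ 2 * fact n / pochhammer c n"

lemma gauss_term_0 [simp]: "gauss_term c 0 = 1"
  by (simp add: gauss_term_def)

lemma gauss_term_pos: "c > 0 \<Longrightarrow> gauss_term c n > 0"
  unfolding gauss_term_def using pochhammer_pos[of c n] central_coeff_pos[of n] by simp

lemma gauss_term_Suc:
  assumes "c > 0"
  shows "gauss_term c (Suc n) = gauss_term c n * (real n + 1/2) ^ 2 / ((real n + 1) * (c + real n))"
proof -
  \<comment> \<open>stated for abstract factors, so that \<open>field_simps\<close> does not expand the Pochhammer symbols\<close>
  have ratio: "(a * h / m) ^ 2 * (m * f) / (P * d) = (a ^ 2 * f / P) * h ^ 2 / (m * d)"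
    if "P \<noteq> 0" "d \<noteq> 0" "m \<noteq> 0" for a h m f P d :: real
    using that by (simp add: field_simps power2_eq_square)
  have "fact (Suc n) = (real n + 1) * (fact n :: real)"
    by (simp add: algebra_simps)
  then have "gauss_term c (Suc n) = (central_coeff n * (real n + 1/2) / (real n + 1)) ^ 2
      * ((real n + 1) * fact n) / (pochhammer c n * (c + real n))"
    unfolding gauss_term_def central_coeff_Suc pochhammer_Suc by simp
  also have "\<dots> = gauss_term c n * (real n + 1/2) ^ 2 / ((real n + 1) * (c + real n))"
    unfolding gauss_term_def using pochhammer_pos[OF assms, of n] assms by (intro ratio) auto
  finally show ?thesis .
qed

lemma gauss_term_shift:
  assumes "c > 0"
  shows "gauss_term (c + 1) n = gauss_term c n * c / (c + real n)"
proof -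
  have "c * pochhammer (c + 1) n = pochhammer c n * (c + real n)"
    using pochhammer_rec[of c n] pochhammer_Suc[of c n] by simp
  then have "pochhammer (c + 1) n = pochhammer c n * (c + real n) / c"
    using assms by (metis nonzero_mult_div_cancel_left less_irrefl)
  then have "gauss_term (c + 1) n = central_coeff n ^ 2 * fact n / (pochhammer c n * (c + real n) / c)"
    unfolding gauss_term_def by simp
  also have "\<dots> = gauss_term c n * c / (c + real n)"
    unfolding gauss_term_def using pochhammer_pos[OF assms, of n] assms by (simp add: field_simps)
  finally show ?thesis .
qed

text \<open>Gauss' contiguous relation, summed up to \<open>N\<close>; the right-hand side telescopes.\<close>

lemma gauss_term_contiguous_partial:
  assumes "c > 0"
  shows "c * (c - 1) * (\<Sum>n<N. gauss_term c n) - (c - 1/2) ^ 2 * (\<Sum>n<N. gauss_term (c + 1) n)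
      = - c * real N * gauss_term c N"
proof -
  have step: "c * (c - 1) * gauss_term c n - (c - 1/2) ^ 2 * gauss_term (c + 1) n
      = (- c * real (Suc n) * gauss_term c (Suc n)) - (- c * real n * gauss_term c n)" for n
  proof -
    have collect: "c * (c - 1) * T - (c - 1/2) ^ 2 * (T * c / d) - (- c * m * (T * h / (m * d)) - (- c * x * T))
        = T * (c * (c - 1) * d - (c - 1/2) ^ 2 * c + c * h - c * x * d) / d"
      if "d \<noteq> 0" "m \<noteq> 0" for T d m h x :: real
      using that by (simp add: field_simps)
    have "c * (c - 1) * gauss_term c n - (c - 1/2) ^ 2 * gauss_term (c + 1) n
        - ((- c * real (Suc n) * gauss_term c (Suc n)) - (- c * real n * gauss_term c n))
      = c * (c - 1) * gauss_term c n - (c - 1/2) ^ 2 * (gauss_term c n * c / (c + real n))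
        - (- c * (real n + 1) * (gauss_term c n * (real n + 1/2) ^ 2 / ((real n + 1) * (c + real n)))
           - (- c * real n * gauss_term c n))"
      unfolding gauss_term_Suc[OF assms] gauss_term_shift[OF assms] of_nat_Suc add.commute[of 1] ..
    also have "\<dots> = gauss_term c n * (c * (c - 1) * (c + real n) - (c - 1/2) ^ 2 * c
        + c * (real n + 1/2) ^ 2 - c * real n * (c + real n)) / (c + real n)"
      using assms by (intro collect) auto
    also have "c * (c - 1) * (c + real n) - (c - 1/2) ^ 2 * c + c * (real n + 1/2) ^ 2
        - c * real n * (c + real n) = 0"
      by (simp add: algebra_simps power2_eq_square)
    finally show ?thesis by simp
  qed
  have "c * (c - 1) * (\<Sum>n<N. gauss_term c n) - (c - 1/2) ^ 2 * (\<Sum>n<N. gauss_term (c + 1) n)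
      = (\<Sum>n<N. c * (c - 1) * gauss_term c n - (c - 1/2) ^ 2 * gauss_term (c + 1) n)"
    by (simp add: sum_distrib_left sum_subtractf)
  also have "\<dots> = - c * real N * gauss_term c N"
    unfolding step by (subst sum_lessThan_telescope) simp
  finally show ?thesis .
qed

lemma fact_div_pochhammer_le:
  assumes "c \<ge> 2"
  shows "fact (Suc n) / pochhammer c (Suc n) \<le> 2 / (c * (real n + 2))"
proof (induction n)
  case (Suc n)
  have cancel: "2 / (c * x) * (x / y) = 2 / (c * y)" if "x \<noteq> 0" for x y
    using that assms by simp
  have "fact (Suc (Suc n)) / pochhammer c (Suc (Suc n))
      = (fact (Suc n) / pochhammer c (Suc n)) * ((real n + 2) / (c + real n + 1))"
    using pochhammer_pos[of c "Suc n"] assms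
    unfolding fact_Suc[of "Suc n"] pochhammer_Suc[of c "Suc n"] by (simp add: field_simps)
  also have "\<dots> \<le> (2 / (c * (real n + 2))) * ((real n + 2) / (real n + 3))"
    using Suc assms by (intro mult_mono divide_left_mono) auto
  also have "\<dots> = 2 / (c * (real n + 3))"
    by (rule cancel) simp
  finally show ?case
    by (simp add: add_ac)
qed (use assms in simp)

lemma gauss_term_Suc_le:
  assumes "c \<ge> 2"
  shows "gauss_term c (Suc n) \<le> (4 / c) * (1 / (real n + 1) ^ 2)"
proof -
  have "gauss_term c (Suc n) = central_coeff (Suc n) ^ 2 * (fact (Suc n) / pochhammer c (Suc n))"
    unfolding gauss_term_def by simp
  also have "\<dots> \<le> (2 / (real n + 2)) * (2 / (c * (real n + 2)))"
    using assms central_coeff_sq_le[of "Suc n"] pochhammer_pos[of c "Suc n"]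
    by (intro mult_mono fact_div_pochhammer_le) (auto simp: add.commute)
  also have "\<dots> = (4 / c) * (1 / (real n + 2) ^ 2)"
    using assms by (simp add: field_simps power2_eq_square)
  also have "\<dots> \<le> (4 / c) * (1 / (real n + 1) ^ 2)"
    using assms by (intro mult_left_mono divide_left_mono power_mono) auto
  finally show ?thesis .
qed

lemma summable_gauss_term_ge_2:
  assumes "c \<ge> 2"
  shows "summable (gauss_term c)"
proof -
  have "summable (\<lambda>n. (4 / c) * (1 / (real n + 1) ^ 2))"
    by (intro summable_mult summable_inverse_Suc_sq)
  then have "summable (\<lambda>n. gauss_term c (Suc n))"
    by (rule summable_comparison_test'[where N=0])
       (use assms gauss_term_pos[of c] gauss_term_Suc_le[OF assms] in \<open>auto simp: less_imp_le\<close>)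
  then show ?thesis
    by (subst (asm) summable_Suc_iff)
qed

lemma suminf_gauss_term_bounds:
  assumes "c \<ge> 2"
  shows "1 \<le> suminf (gauss_term c) \<and> suminf (gauss_term c) \<le> 1 + (4 / c) * (\<Sum>n. 1 / (real n + 1) ^ 2)"
proof -
  have s: "summable (\<lambda>n. gauss_term c (Suc n))"
    using summable_gauss_term_ge_2[OF assms] by (subst summable_Suc_iff)
  have "suminf (gauss_term c) = 1 + (\<Sum>n. gauss_term c (Suc n))"
    using suminf_split_head[OF summable_gauss_term_ge_2[OF assms]] by simp
  moreover have "0 \<le> (\<Sum>n. gauss_term c (Suc n))"
    using gauss_term_pos[of c] assms by (intro suminf_nonneg s) (auto simp: less_imp_le)
  moreover have "(\<Sum>n. gauss_term c (Suc n)) \<le> (\<Sum>n. (4 / c) * (1 / (real n + 1) ^ 2))"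
    using gauss_term_Suc_le[OF assms] by (intro suminf_le s summable_mult summable_inverse_Suc_sq) auto
  ultimately show ?thesis
    using suminf_mult[OF summable_inverse_Suc_sq, of "4 / c"] by simp
qed

lemma summable_gauss_term:
  assumes "c > 1"
  shows "summable (gauss_term c)"
proof (rule bounded_imp_summable)
  show "0 \<le> gauss_term c n" for n
    using gauss_term_pos[of c n] assms by simp
  have s: "summable (gauss_term (c + 1))"
    by (rule summable_gauss_term_ge_2) (use assms in simp)
  fix n
  have "c * (c - 1) * (\<Sum>k<Suc n. gauss_term c k)
      = (c - 1/2) ^ 2 * (\<Sum>k<Suc n. gauss_term (c + 1) k) - c * real (Suc n) * gauss_term c (Suc n)"
    using gauss_term_contiguous_partial[of c "Suc n"] assms by simp
  also have "\<dots> \<le> (c - 1/2) ^ 2 * (\<Sum>k<Suc n. gauss_term (c + 1) k)"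
    using gauss_term_pos[of c "Suc n"] assms by simp
  also have "\<dots> \<le> (c - 1/2) ^ 2 * suminf (gauss_term (c + 1))"
    using gauss_term_pos[of "c + 1"] assms
    by (intro mult_left_mono sum_le_suminf s) (auto simp: less_imp_le)
  finally show "(\<Sum>k\<le>n. gauss_term c k) \<le> (c - 1/2) ^ 2 * suminf (gauss_term (c + 1)) / (c * (c - 1))"
    using assms by (simp add: pos_le_divide_eq mult_ac lessThan_Suc_atMost)
qed

lemma suminf_gauss_term_contiguous:
  assumes "c > 1"
  shows "c * (c - 1) * suminf (gauss_term c) = (c - 1/2) ^ 2 * suminf (gauss_term (c + 1))"
proof -
  let ?M = "c * (c - 1) * suminf (gauss_term c) - (c - 1/2) ^ 2 * suminf (gauss_term (c + 1))"
  have "(\<lambda>N. c * (c - 1) * (\<Sum>n<N. gauss_term c n) - (c - 1/2) ^ 2 * (\<Sum>n<N. gauss_term (c + 1) n))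
      \<longlonglongrightarrow> ?M"
    using assms by (intro tendsto_intros summable_LIMSEQ summable_gauss_term) auto
  then have "(\<lambda>N. (-1 / c) * (- c * real N * gauss_term c N)) \<longlonglongrightarrow> (-1 / c) * ?M"
    using gauss_term_contiguous_partial[of c] assms by (intro tendsto_mult_left) simp
  then have "(\<lambda>N. real N * gauss_term c N) \<longlonglongrightarrow> (-1 / c) * ?M"
    using assms by simp
  then have "(\<lambda>n. real (Suc n) * gauss_term c (Suc n)) \<longlonglongrightarrow> (-1 / c) * ?M"
    by (rule LIMSEQ_Suc)
  moreover have "summable (\<lambda>n. gauss_term c (Suc n))"
    using summable_gauss_term[OF assms] by (subst summable_Suc_iff)
  ultimately have "(-1 / c) * ?M = 0"
    using gauss_term_pos[of c] assms by (intro summable_Suc_mult_tendsto_0) (auto simp: less_imp_le)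
  then show ?thesis
    using assms by simp
qed

lemma suminf_gauss_term_iterate:
  assumes "c > 1"
  shows "suminf (gauss_term c) =
    (\<Prod>k<m. (c + real k - 1/2) ^ 2 / ((c + real k) * (c + real k - 1))) * suminf (gauss_term (c + real m))"
proof (induction m)
  case (Suc m)
  have "c + real m > 1"
    using assms by simp
  then have "suminf (gauss_term (c + real m)) =
      (c + real m - 1/2) ^ 2 / ((c + real m) * (c + real m - 1)) * suminf (gauss_term (c + real m + 1))"
    using suminf_gauss_term_contiguous[of "c + real m"] mult_pos_pos[of "c + real m" "c + real m - 1"]
    by (simp add: field_simps)
  then show ?case
    using Suc by (simp add: algebra_simps)
qed simp

lemma prod_eq_pochhammer_ratio:
  assumes "c > 1"
  shows "(\<Prod>k<m. (c + real k - 1/2) ^ 2 / ((c + real k) * (c + real k - 1)))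
    = pochhammer (c - 1/2) m ^ 2 / (pochhammer c m * pochhammer (c - 1) m)"
proof (induction m)
  case (Suc m)
  have "c - 1 + real m = c + real m - 1" "c - 1/2 + real m = c + real m - 1/2"
    by simp_all
  then show ?case
    unfolding prod.lessThan_Suc Suc pochhammer_Suc
    using pochhammer_pos[of c m] pochhammer_pos[of "c - 1" m] assms
    by (simp add: field_simps power2_eq_square)
qed simp

lemma pochhammer_eq_Gamma_series:
  fixes z :: real
  assumes "z > 0"
  shows "pochhammer z m = fact m * exp (z * ln (real m)) / ((z + real m) * Gamma_series z m)"
proof -
  have solve: "P = E / (d * G)" if "P \<noteq> 0" "d \<noteq> 0" "E \<noteq> 0" "G = E / (P * d)" for P d E G :: real
  proof -
    have "G \<noteq> 0"
      using that by simp
    with that show ?thesis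
      by (simp add: field_simps)
  qed
  show ?thesis
    by (rule solve) (use pochhammer_pos[OF assms, of m] assms in \<open>auto simp: Gamma_series_def pochhammer_Suc\<close>)
qed

lemma tendsto_pochhammer_ratio:
  fixes c :: real
  assumes "c > 1"
  shows "(\<lambda>m. pochhammer (c - 1/2) m ^ 2 / (pochhammer c m * pochhammer (c - 1) m))
    \<longlonglongrightarrow> Gamma c * Gamma (c - 1) / Gamma (c - 1/2) ^ 2"
proof -
  let ?G = "Gamma_series :: real \<Rightarrow> nat \<Rightarrow> real"
  have G_pos: "?G z m > 0" if "z > 0" for z m
    unfolding Gamma_series_def using pochhammer_pos[of z "m + 1"] that by simp
  have "eventually (\<lambda>m. (?G c m * ?G (c - 1) m / ?G (c - 1/2) m ^ 2)
        * ((c + real m) * (c - 1 + real m) / (c - 1/2 + real m) ^ 2)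
      = pochhammer (c - 1/2) m ^ 2 / (pochhammer c m * pochhammer (c - 1) m)) sequentially"
  proof (rule eventually_sequentiallyI[of 1])
    fix m :: nat
    let ?E = "\<lambda>z. exp (z * ln (real m))"
    have ratio: "(F ^ 2 * (E1 * E2) / ((d3 * G3) ^ 2)) / ((F * E1 / (d1 * G1)) * (F * E2 / (d2 * G2)))
        = (G1 * G2 / G3 ^ 2) * (d1 * d2 / d3 ^ 2)"
      if "F \<noteq> 0" "E1 \<noteq> 0" "E2 \<noteq> 0" "d1 \<noteq> 0" "d2 \<noteq> 0" "d3 \<noteq> 0" "G1 \<noteq> 0" "G2 \<noteq> 0" "G3 \<noteq> 0"
      for F E1 E2 d1 d2 d3 G1 G2 G3 :: real
      using that by (simp add: field_simps power2_eq_square)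
    have "?E (c - 1/2) ^ 2 = ?E c * ?E (c - 1)"
      by (simp add: power2_eq_square exp_add[symmetric] algebra_simps)
    then have "pochhammer (c - 1/2) m ^ 2
        = fact m ^ 2 * (?E c * ?E (c - 1)) / ((c - 1/2 + real m) * ?G (c - 1/2) m) ^ 2"
      using pochhammer_eq_Gamma_series[of "c - 1/2" m] assms
      by (simp add: power_divide power_mult_distrib)
    then show "(?G c m * ?G (c - 1) m / ?G (c - 1/2) m ^ 2)
        * ((c + real m) * (c - 1 + real m) / (c - 1/2 + real m) ^ 2)
      = pochhammer (c - 1/2) m ^ 2 / (pochhammer c m * pochhammer (c - 1) m)"
      using pochhammer_eq_Gamma_series[of c m] pochhammer_eq_Gamma_series[of "c - 1" m]
      using assms G_pos[of c m] G_pos[of "c - 1" m] G_pos[of "c - 1/2" m]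
      by (simp only:) (rule ratio[symmetric], auto)
  qed
  moreover have "(\<lambda>m. (?G c m * ?G (c - 1) m / ?G (c - 1/2) m ^ 2)
        * ((c + real m) * (c - 1 + real m) / (c - 1/2 + real m) ^ 2))
      \<longlonglongrightarrow> (Gamma c * Gamma (c - 1) / Gamma (c - 1/2) ^ 2) * 1"
  proof (intro tendsto_intros)
    show "(\<lambda>m. (c + real m) * (c - 1 + real m) / (c - 1/2 + real m) ^ 2) \<longlonglongrightarrow> 1"
      by real_asymp
    show "Gamma (c - 1/2) ^ 2 \<noteq> 0"
    proof -
      have "Gamma (c - 1/2) > 0"
        using assms by (intro Gamma_real_pos) simp
      then show ?thesis by simp
    qed
  qed
  ultimately show ?thesis
    using Lim_transform_eventually by fastforce
qed

lemma tendsto_suminf_gauss_term_at_top: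
  assumes "c > 1"
  shows "(\<lambda>m. suminf (gauss_term (c + real m))) \<longlonglongrightarrow> 1"
proof (rule tendsto_sandwich)
  define K where "K = (\<Sum>n. 1 / (real n + 1) ^ 2 :: real)"
  show "eventually (\<lambda>m. 1 \<le> suminf (gauss_term (c + real m))) sequentially"
    using suminf_gauss_term_bounds assms by (intro eventually_sequentiallyI[of 1]) auto
  show "eventually (\<lambda>m. suminf (gauss_term (c + real m)) \<le> 1 + (4 / (c + real m)) * K) sequentially"
    using suminf_gauss_term_bounds assms unfolding K_def by (intro eventually_sequentiallyI[of 1]) auto
  have "(\<lambda>m. 1 + (4 / (c + real m)) * K) \<longlonglongrightarrow> 1 + 0 * K"
    by (intro tendsto_intros) real_asymp
  then show "(\<lambda>m. 1 + (4 / (c + real m)) * K) \<longlonglongrightarrow> 1"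
    by simp
qed simp

theorem gauss_sum_half_half:
  assumes "c > 1"
  shows "suminf (gauss_term c) = Gamma c * Gamma (c - 1) / Gamma (c - 1/2) ^ 2"
proof -
  have "(\<lambda>m. (\<Prod>k<m. (c + real k - 1/2) ^ 2 / ((c + real k) * (c + real k - 1)))
        * suminf (gauss_term (c + real m)))
      \<longlonglongrightarrow> (Gamma c * Gamma (c - 1) / Gamma (c - 1/2) ^ 2) * 1"
    unfolding prod_eq_pochhammer_ratio[OF assms]
    by (intro tendsto_mult tendsto_pochhammer_ratio tendsto_suminf_gauss_term_at_top assms)
  then show ?thesis
    using suminf_gauss_term_iterate[OF assms] by (simp add: LIMSEQ_const_iff)
qed

section \<open>The constant \<open>4 ln 2 / \<pi>\<close>\<close>

text \<open>\<open>1/(\<pi> n)\<close> is the coefficient of \<open>-ln(1-x)/\<pi>\<close>. The sum of the defect is the limit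
  \<open>\<epsilon> \<rightarrow> 0\<close> of \<open>\<Sum> log_defect n \<cdot> n!/(1+\<epsilon>)\<^sub>n\<close>, which Gauss's summation evaluates in closed form.\<close>

definition log_defect :: "nat \<Rightarrow> real" where
  "log_defect n = (if n = 0 then 0 else 1 / (pi * real n) - central_coeff n ^ 2)"

lemma log_defect_nonneg: "0 \<le> log_defect n"
  using central_coeff_sq_upper[of n] by (simp add: log_defect_def field_simps)

lemma log_defect_le: "log_defect n \<le> inverse (real n ^ 2)"
proof (cases "n = 0")
  case False
  then have "(2 / pi) / (2 * real n + 1) \<le> central_coeff n ^ 2"
    using central_coeff_sq_lower[of n] by (simp add: pos_divide_le_eq mult_ac)
  then have "log_defect n \<le> 1 / (pi * real n) - 2 / (pi * (2 * real n + 1))"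
    using False by (simp add: log_defect_def)
  also have "\<dots> = (1 * (pi * (2 * real n + 1)) - 2 * (pi * real n)) / ((pi * real n) * (pi * (2 * real n + 1)))"
    by (rule diff_frac_eq) (use False in auto)
  also have "\<dots> = pi / ((pi * real n) * (pi * (2 * real n + 1)))"
    by (simp add: algebra_simps)
  also have "\<dots> = 1 / (pi * real n * (2 * real n + 1))"
    by simp
  also have "\<dots> \<le> 1 / (real n * real n)"
  proof (rule divide_left_mono)
    have "real n * real n \<le> 1 * (real n * (2 * real n + 1))"
      by (simp add: algebra_simps)
    also have "\<dots> \<le> pi * (real n * (2 * real n + 1))"
      using pi_gt3 by (intro mult_right_mono) auto
    finally show "real n * real n \<le> pi * real n * (2 * real n + 1)"
      by (simp add: mult.assoc)
    show "0 < pi * real n * (2 * real n + 1) * (real n * real n)"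
      using False by simp
  qed simp
  finally show ?thesis
    by (simp add: power2_eq_square divide_inverse)
qed (simp add: log_defect_def)

lemma log_defect_bound: "\<bar>log_defect n\<bar> \<le> 1"
proof -
  have "inverse (real n ^ 2) \<le> 1"
    by (cases n) (auto simp: field_simps)
  then show ?thesis
    using log_defect_le[of n] log_defect_nonneg[of n] by linarith
qed

lemma summable_log_defect: "summable log_defect"
  using log_defect_nonneg log_defect_le
  by (intro summable_comparison_test[OF _ inverse_power_summable[of 2]] exI[of _ 0]) auto

definition poch_ratio :: "real \<Rightarrow> nat \<Rightarrow> real" where
  "poch_ratio e n = fact n / pochhammer (1 + e) n"

lemma poch_ratio_0 [simp]: "poch_ratio e 0 = 1"
  by (simp add: poch_ratio_def)

lemma poch_ratio_Suc: "e > -1 \<Longrightarrow> poch_ratio e (Suc n) = poch_ratio e n * ((real n + 1) / (real n + 1 + e))"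
  unfolding poch_ratio_def by (simp add: pochhammer_Suc field_simps)

lemma poch_ratio_pos: "e > -1 \<Longrightarrow> poch_ratio e n > 0"
  unfolding poch_ratio_def using pochhammer_pos[of "1 + e" n] by simp

lemma poch_ratio_le_1: "e \<ge> 0 \<Longrightarrow> poch_ratio e n \<le> 1"
proof (induction n)
  case (Suc n)
  have "poch_ratio e n * ((real n + 1) / (real n + 1 + e)) \<le> 1 * 1"
    using Suc poch_ratio_pos[of e n] by (intro mult_mono) auto
  then show ?case
    using Suc by (simp add: poch_ratio_Suc)
qed simp

lemma continuous_on_poch_ratio: "continuous_on {0..1} (\<lambda>e. poch_ratio e n)"
proof -
  have "continuous_on {0..1} (\<lambda>e::real. fact n / (\<Prod>i=0..<n. (1 + e) + of_nat i))"
    by (intro continuous_intros) (auto simp: prod_zero_iff)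
  then show ?thesis
    unfolding poch_ratio_def pochhammer_prod .
qed

lemma sums_poch_ratio_div:
  assumes "e > 0"
  shows "(\<lambda>n. poch_ratio e (Suc n) / real (Suc n)) sums (1 / e)"
proof -
  have partial: "(\<Sum>n<N. poch_ratio e (Suc n) / real (Suc n)) = (1 - poch_ratio e N) / e" for N
  proof (induction N)
    case (Suc N)
    have merge: "(1 - x) / e + x / d = (1 - x * (d - e) / d) / e" if "d \<noteq> 0" for x d
      using that assms by (simp add: field_simps)
    have step: "poch_ratio e (Suc N) = poch_ratio e N * (real N + 1) / (real N + 1 + e)"
      using assms poch_ratio_Suc[of e N] by simp
    have "(\<Sum>n<Suc N. poch_ratio e (Suc n) / real (Suc n))
        = (1 - poch_ratio e N) / e + poch_ratio e (Suc N) / (real N + 1)"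
      using Suc by simp
    also have "\<dots> = (1 - poch_ratio e N) / e + poch_ratio e N / (real N + 1 + e)"
      unfolding step using assms by simp
    also have "\<dots> = (1 - poch_ratio e N * ((real N + 1 + e) - e) / (real N + 1 + e)) / e"
      by (rule merge) (use assms in simp)
    also have "\<dots> = (1 - poch_ratio e (Suc N)) / e"
      unfolding step by simp
    finally show ?case .
  qed simp
  have "decseq (poch_ratio e)"
  proof (rule decseq_SucI)
    fix n
    have "poch_ratio e n * ((real n + 1) / (real n + 1 + e)) \<le> poch_ratio e n * 1"
      using assms poch_ratio_pos[of e n] by (intro mult_left_mono) auto
    then show "poch_ratio e (Suc n) \<le> poch_ratio e n"
      using assms by (simp add: poch_ratio_Suc)
  qed
  moreover have "Bseq (poch_ratio e)"
    using poch_ratio_le_1[of e] poch_ratio_pos[of e] assms by (intro BseqI'[where K=1]) (simp add: abs_of_pos)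
  ultimately obtain L where L: "poch_ratio e \<longlonglongrightarrow> L"
    using Bseq_monoseq_convergent[of "poch_ratio e"] by (auto simp: monoseq_iff convergent_def)
  have S: "(\<lambda>n. poch_ratio e (Suc n) / real (Suc n)) sums ((1 - L) / e)"
    unfolding sums_def partial by (intro tendsto_intros L) (use assms in simp)
  have "L = 0"
  proof (rule summable_Suc_mult_tendsto_0)
    show "summable (\<lambda>n. poch_ratio e (Suc n) / real (Suc n))"
      using S by (rule sums_summable)
    show "0 \<le> poch_ratio e (Suc n) / real (Suc n)" for n
      using poch_ratio_pos[of e "Suc n"] assms by simp
    show "(\<lambda>n. real (Suc n) * (poch_ratio e (Suc n) / real (Suc n))) \<longlonglongrightarrow> L"
      using LIMSEQ_Suc[OF L] by simp
  qed
  with S show ?thesis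
    by simp
qed

lemma suminf_log_defect_poch_ratio:
  assumes "e > 0"
  shows "(\<Sum>n. log_defect n * poch_ratio e n) = 1 + 1 / (pi * e) - Gamma (1 + e) ^ 2 / Gamma (1/2 + e) ^ 2 / e"
proof -
  define a where "a n = (if n = 0 then 0 else poch_ratio e n / (pi * real n))" for n
  have "(\<lambda>n. (1 / pi) * (poch_ratio e (Suc n) / real (Suc n))) sums ((1 / pi) * (1 / e))"
    by (intro sums_mult sums_poch_ratio_div assms)
  then have "(\<lambda>n. a (Suc n)) sums (1 / (pi * e))"
    by (simp add: a_def)
  then have sa: "a sums (1 / (pi * e))"
    by (subst (asm) sums_Suc_iff) (simp add: a_def)
  have sb: "gauss_term (1 + e) sums (Gamma (1 + e) ^ 2 / Gamma (1/2 + e) ^ 2 / e)"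
  proof -
    have "e \<notin> \<int>\<^sub>\<le>\<^sub>0"
      using assms nonpos_Ints_nonpos[of e] by auto
    then have "Gamma (1 + e) = e * Gamma e"
      using Gamma_plus1[of e] by (simp add: add.commute)
    moreover have "1 + e - 1/2 = 1/2 + e"
      by simp
    ultimately have "suminf (gauss_term (1 + e)) = Gamma (1 + e) ^ 2 / Gamma (1/2 + e) ^ 2 / e"
      using gauss_sum_half_half[of "1 + e"] assms by (simp add: power2_eq_square field_simps)
    then show ?thesis
      using summable_gauss_term[of "1 + e"] assms by (simp add: sums_iff)
  qed
  have "(\<lambda>n. a n - gauss_term (1 + e) n + (if n = 0 then 1 else 0))
      sums (1 / (pi * e) - Gamma (1 + e) ^ 2 / Gamma (1/2 + e) ^ 2 / e + 1)"
    by (intro sums_add sums_diff sa sb sums_single[of 0 "\<lambda>_. 1::real", simplified])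
  moreover have "(\<lambda>n. a n - gauss_term (1 + e) n + (if n = 0 then 1 else 0)) = (\<lambda>n. log_defect n * poch_ratio e n)"
  proof
    fix n
    have "gauss_term (1 + e) n = central_coeff n ^ 2 * poch_ratio e n"
      by (simp add: gauss_term_def poch_ratio_def)
    then show "a n - gauss_term (1 + e) n + (if n = 0 then 1 else 0) = log_defect n * poch_ratio e n"
      by (simp add: a_def log_defect_def algebra_simps)
  qed
  ultimately show ?thesis
    by (simp add: sums_iff)
qed

lemma has_field_derivative_Gamma_ratio_sq:
  "((\<lambda>e::real. Gamma (1 + e) ^ 2 / Gamma (1/2 + e) ^ 2) has_field_derivative (4 * ln 2 / pi)) (at 0)"
proof -
  have "(1/2::real) \<notin> \<int>\<^sub>\<le>\<^sub>0"
    by (auto elim!: nonpos_Ints_cases)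
  then have "((\<lambda>e::real. Gamma (1 + e) ^ 2 / Gamma (1/2 + e) ^ 2) has_field_derivative
      (2 * Gamma 1 * (Gamma 1 * Digamma 1) * Gamma (1/2) ^ 2
        - Gamma 1 ^ 2 * (2 * Gamma (1/2) * (Gamma (1/2) * Digamma (1/2))))
        / (Gamma (1/2) ^ 2 * Gamma (1/2) ^ 2)) (at 0)"
    by (auto intro!: derivative_eq_intros simp: Gamma_one_half_real)
  moreover have "Gamma (1/2::real) * Gamma (1/2) = pi"
    using Gamma_one_half_real by (simp add: power2_eq_square)
  ultimately show ?thesis
    by (simp add: Digamma_one_half power2_eq_square field_simps)
qed

lemma continuous_on_suminf_log_defect_poch_ratio:
  "continuous_on {0..1} (\<lambda>e. \<Sum>n. log_defect n * poch_ratio e n)"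
proof -
  have "uniform_limit {0..1} (\<lambda>N e. \<Sum>n<N. log_defect n * poch_ratio e n)
      (\<lambda>e. \<Sum>n. log_defect n * poch_ratio e n) sequentially"
  proof (rule Weierstrass_m_test[OF _ summable_log_defect])
    fix n and e :: real assume "e \<in> {0..1}"
    then show "norm (log_defect n * poch_ratio e n) \<le> log_defect n"
      using poch_ratio_pos[of e n] poch_ratio_le_1[of e n] log_defect_nonneg[of n]
      by (simp add: abs_mult mult_left_le)
  qed
  then show ?thesis
    by (rule uniform_limit_theorem[rotated])
       (auto intro!: always_eventually continuous_intros continuous_on_poch_ratio)
qed

theorem suminf_log_defect: "suminf log_defect = 1 - 4 * ln 2 / pi"
proof -
  define S where "S e = (\<Sum>n. log_defect n * poch_ratio e n)" for e
  define h where "h e = Gamma (1 + e) ^ 2 / Gamma (1/2 + e) ^ 2" for e :: real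
  have "continuous_on {0..1} S"
    unfolding S_def by (rule continuous_on_suminf_log_defect_poch_ratio)
  moreover have "S 0 = suminf log_defect"
    by (simp add: S_def poch_ratio_def pochhammer_fact[symmetric])
  ultimately have lim0: "(S \<longlongrightarrow> suminf log_defect) (at_right 0)"
    using continuous_on_Icc_at_rightD by fastforce
  have "h 0 = 1 / pi"
    by (simp add: h_def Gamma_one_half_real)
  have "((\<lambda>e. (h e - h 0) / (e - 0)) \<longlongrightarrow> 4 * ln 2 / pi) (at 0 within {0<..})"
    using has_field_derivative_at_within[OF has_field_derivative_Gamma_ratio_sq]
    unfolding h_def[abs_def] by (simp add: has_field_derivative_iff)
  then have "((\<lambda>e. 1 - (h e - h 0) / (e - 0)) \<longlongrightarrow> 1 - 4 * ln 2 / pi) (at_right 0)"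
    by (rule tendsto_diff[OF tendsto_const])
  moreover have "eventually (\<lambda>e. 1 - (h e - h 0) / (e - 0) = S e) (at_right 0)"
  proof (rule eventually_mono[OF eventually_at_right_less])
    fix e :: real assume "e > 0"
    then show "1 - (h e - h 0) / (e - 0) = S e"
      using suminf_log_defect_poch_ratio[of e] \<open>h 0 = 1 / pi\<close>
      by (simp add: S_def h_def field_simps)
  qed
  ultimately have "(S \<longlongrightarrow> 1 - 4 * ln 2 / pi) (at_right 0)"
    by (rule Lim_transform_eventually)
  with lim0 show ?thesis
    using tendsto_unique[OF trivial_limit_at_right_real] by blast
qed

section \<open>Power series with bounded coefficients\<close>

definition pseries :: "(nat \<Rightarrow> real) \<Rightarrow> real \<Rightarrow> real" where
  "pseries c x = (\<Sum>n. c n * x ^ n)"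

lemma pseries_0 [simp]: "pseries c 0 = c 0"
  by (simp add: pseries_def)

lemma summable_pseries:
  fixes c :: "nat \<Rightarrow> real" and x :: real
  assumes "\<And>n. \<bar>c n\<bar> \<le> M" "\<bar>x\<bar> < 1"
  shows "summable (\<lambda>n. c n * x ^ n)"
proof (rule summable_comparison_test[OF _ summable_mult[OF summable_geometric[of "\<bar>x\<bar>"]]])
  show "\<exists>N. \<forall>n\<ge>N. norm (c n * x ^ n) \<le> M * \<bar>x\<bar> ^ n"
    using assms(1) by (intro exI[of _ 0]) (auto simp: abs_mult power_abs intro!: mult_right_mono)
qed (use assms in simp)

lemma pseries_sums:
  assumes "\<And>n. \<bar>c n\<bar> \<le> M" "\<bar>x\<bar> < 1"
  shows "(\<lambda>n. c n * x ^ n) sums pseries c x"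
  unfolding pseries_def by (rule summable_sums, rule summable_pseries[OF assms])

lemma isCont_pseries:
  assumes "\<And>n. \<bar>c n\<bar> \<le> M" "\<bar>x\<bar> < 1"
  shows "isCont (pseries c) x"
proof -
  have "summable (\<lambda>n. c n * ((1 + \<bar>x\<bar>) / 2) ^ n)"
    by (rule summable_pseries[OF assms(1)]) (use assms in auto)
  moreover have "norm x < norm ((1 + \<bar>x\<bar>) / 2)"
    using assms by auto
  ultimately show ?thesis
    unfolding pseries_def[abs_def] by (rule isCont_powser)
qed

lemma continuous_on_pseries_Icc:
  assumes "\<And>n. 0 \<le> c n" "summable c"
  shows "continuous_on {0..1} (pseries c)"
proof -
  have "uniform_limit {0..1} (\<lambda>N x. \<Sum>n<N. c n * x ^ n) (pseries c) sequentially"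
    unfolding pseries_def[abs_def]
  proof (rule Weierstrass_m_test[OF _ assms(2)])
    fix n and x :: real assume "x \<in> {0..1}"
    then show "norm (c n * x ^ n) \<le> c n"
      using assms(1)[of n] power_le_one[of x n] by (simp add: abs_mult mult_left_le)
  qed
  then show ?thesis
    by (rule uniform_limit_theorem[rotated]) (auto intro!: always_eventually continuous_intros)
qed

lemma tendsto_pseries_at_left_1:
  assumes "\<And>n. 0 \<le> c n" "c sums s"
  shows "(pseries c \<longlongrightarrow> s) (at_left 1)"
  using continuous_on_Icc_at_leftD[OF continuous_on_pseries_Icc[OF assms(1) sums_summable[OF assms(2)]]]
  by (simp add: pseries_def sums_unique[OF assms(2), symmetric])

lemma pseries_ge_coeff_0:
  assumes "\<And>n. 0 \<le> c n" "\<And>n. \<bar>c n\<bar> \<le> M" "0 \<le> x" "x < 1"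
  shows "c 0 \<le> pseries c x"
proof -
  have "(\<Sum>n<1. c n * x ^ n) \<le> pseries c x"
    unfolding pseries_def using assms by (intro sum_le_suminf summable_pseries) auto
  then show ?thesis
    by simp
qed

lemma pseries_strict_mono:
  assumes "\<And>n. 0 \<le> c n" "\<And>n. \<bar>c n\<bar> \<le> M" "c 1 > 0" "0 \<le> x" "x < y" "y < 1"
  shows "pseries c x < pseries c y"
proof -
  have d: "(\<lambda>n. c n * y ^ n - c n * x ^ n) sums (pseries c y - pseries c x)"
    using assms by (intro sums_diff pseries_sums[OF assms(2)]) auto
  have "0 < (\<Sum>n. c n * y ^ n - c n * x ^ n)"
  proof (rule suminf_pos2[where i=1])
    show "summable (\<lambda>n. c n * y ^ n - c n * x ^ n)"
      using d by (rule sums_summable)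
    show "0 \<le> c n * y ^ n - c n * x ^ n" for n
      using assms by (auto intro!: mult_left_mono power_mono)
  qed (use assms in simp)
  then show ?thesis
    using d by (simp add: sums_iff)
qed

lemma pseries_less_sum:
  assumes "\<And>n. 0 \<le> c n" "\<And>n. \<bar>c n\<bar> \<le> M" "c 1 > 0" "0 \<le> x" "x < 1" "c sums s"
  shows "pseries c x < s"
proof -
  have d: "(\<lambda>n. c n - c n * x ^ n) sums (s - pseries c x)"
    using assms by (intro sums_diff pseries_sums[OF assms(2)]) auto
  have "0 < (\<Sum>n. c n - c n * x ^ n)"
  proof (rule suminf_pos2[where i=1])
    show "summable (\<lambda>n. c n - c n * x ^ n)"
      using d by (rule sums_summable)
    show "0 \<le> c n - c n * x ^ n" for n
      using assms(1)[of n] power_le_one[of x n] assms(4,5) mult_left_le[of "x ^ n" "c n"] by simp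
  qed (use assms in simp)
  then show ?thesis
    using d by (simp add: sums_iff)
qed

section \<open>The coefficients of \<open>u\<close>, \<open>v\<close> and \<open>\<Delta>\<close>\<close>

definition coeff_1 :: "nat \<Rightarrow> real" where
  "coeff_1 n = central_coeff n ^ 2"

definition coeff_2 :: "nat \<Rightarrow> real" where
  "coeff_2 n = central_coeff n ^ 2 / (real n + 1)"

definition coeff_3 :: "nat \<Rightarrow> real" where
  "coeff_3 n = 8 * (real n + 1) * central_coeff (Suc n) ^ 2 / (real n + 2)"

definition coeff_u :: "nat \<Rightarrow> real" where
  "coeff_u n = 9/8 * central_coeff n ^ 2 / ((real n + 1) * (real n + 2))"

definition coeff_v :: "nat \<Rightarrow> real" where
  "coeff_v n = coeff_1 n + coeff_2 n / 2"

lemma hyp2F1_half_half_1: "hyp2F1 (1/2) (1/2) 1 x = pseries coeff_1 x"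
proof -
  have "pochhammer (1/2) n * pochhammer (1/2) n / (pochhammer 1 n * fact n) = coeff_1 n" for n
    by (simp add: coeff_1_def central_coeff_def pochhammer_fact[symmetric] power2_eq_square)
  then show ?thesis
    unfolding hyp2F1_def pseries_def by simp
qed

lemma hyp2F1_half_half_2: "hyp2F1 (1/2) (1/2) 2 x = pseries coeff_2 x"
proof -
  have "pochhammer (1/2) n * pochhammer (1/2) n / (pochhammer 2 n * fact n) = coeff_2 n" for n
  proof -
    have "pochhammer 2 n = (fact (Suc n) :: real)"
      using pochhammer_rec[of "1::real" n] pochhammer_fact[of "Suc n", where 'a=real] by simp
    moreover have "fact (Suc n) = (real n + 1) * (fact n :: real)"
      by (simp add: algebra_simps)
    ultimately show ?thesis
      by (simp add: coeff_2_def central_coeff_def field_simps power2_eq_square)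
  qed
  then show ?thesis
    unfolding hyp2F1_def pseries_def by simp
qed

lemma hyp2F1_three_halves: "hyp2F1 (3/2) (3/2) 3 x = pseries coeff_3 x"
proof -
  have "pochhammer (3/2) n * pochhammer (3/2) n / (pochhammer 3 n * fact n) = coeff_3 n" for n
  proof -
    have ratio: "2 * (a * (m1 * f)) * (2 * (a * (m1 * f))) / (m2 * m1 * f / 2 * f) = 8 * m1 * a ^ 2 / m2"
      if "f \<noteq> 0" "m1 \<noteq> 0" "m2 \<noteq> 0" for a f m1 m2 :: real
      using that by (simp add: field_simps power2_eq_square)
    have p32: "pochhammer (3/2::real) n = 2 * pochhammer (1/2) (Suc n)"
      using pochhammer_rec[of "1/2::real" n] by simp
    have p3: "pochhammer (3::real) n = fact (Suc (Suc n)) / 2"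
      using pochhammer_rec[of "1::real" "Suc n"] pochhammer_rec[of "2::real" n]
        pochhammer_fact[of "Suc (Suc n)", where 'a=real]
      by (simp add: numeral_2_eq_2 algebra_simps)
    have p12: "pochhammer (1/2) (Suc n) = central_coeff (Suc n) * fact (Suc n)"
      by (simp add: central_coeff_def)
    have f1: "fact (Suc n) = (real n + 1) * (fact n :: real)"
      by (simp add: algebra_simps)
    have f2: "fact (Suc (Suc n)) = (real n + 2) * (real n + 1) * (fact n :: real)"
      by (simp add: algebra_simps)
    show ?thesis
      unfolding p32 p3 p12 f2 f1 coeff_3_def by (rule ratio) auto
  qed
  then show ?thesis
    unfolding hyp2F1_def pseries_def by simp
qed

lemma coeff_1_nonneg: "0 \<le> coeff_1 n"
  by (simp add: coeff_1_def)

lemma coeff_1_bound: "\<bar>coeff_1 n\<bar> \<le> 1"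
  using central_coeff_sq_le_1[of n] by (simp add: coeff_1_def)

lemma coeff_2_nonneg: "0 \<le> coeff_2 n"
  by (simp add: coeff_2_def)

lemma coeff_2_bound: "\<bar>coeff_2 n\<bar> \<le> 1"
proof -
  have "central_coeff n ^ 2 / (real n + 1) \<le> central_coeff n ^ 2 / 1"
    by (rule divide_left_mono) auto
  then show ?thesis
    using central_coeff_sq_le_1[of n] by (simp add: coeff_2_def)
qed

lemma coeff_3_bound: "\<bar>coeff_3 n\<bar> \<le> 8"
proof -
  have "coeff_3 n = 8 * central_coeff (Suc n) ^ 2 * ((real n + 1) / (real n + 2))"
    by (simp add: coeff_3_def)
  also have "\<dots> \<le> 8 * 1 * 1"
    using central_coeff_sq_le_1[of "Suc n"] by (intro mult_mono) auto
  finally show ?thesis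
    by (simp add: coeff_3_def)
qed

lemma coeff_u_pos: "coeff_u n > 0"
  using central_coeff_pos[of n] by (simp add: coeff_u_def)

lemma coeff_u_bound: "\<bar>coeff_u n\<bar> \<le> 1"
proof -
  have "2 \<le> (real n + 1) * (real n + 2)"
    using mult_mono[of 1 "real n + 1" 2 "real n + 2"] by simp
  then have "coeff_u n \<le> 9/8 * central_coeff n ^ 2 / 2"
    unfolding coeff_u_def by (intro divide_left_mono) auto
  then show ?thesis
    using central_coeff_sq_le_1[of n] coeff_u_pos[of n] by simp
qed

lemma coeff_v_bound: "\<bar>coeff_v n\<bar> \<le> 2"
  using coeff_1_bound[of n] coeff_2_bound[of n] coeff_1_nonneg[of n] coeff_2_nonneg[of n]
  by (simp add: coeff_v_def)

lemma coeff_u_eq: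
  "coeff_u n = 1/16 * (coeff_3 n - (if n = 0 then 0 else coeff_3 (n - 1))) + 1/2 * coeff_2 n"
proof (cases n)
  case 0
  then show ?thesis
    by (simp add: coeff_3_def coeff_2_def coeff_u_def power2_eq_square)
next
  case (Suc m)
  have combine: "(1/16) * (8 * a * (Y * (a - 1/2) / a) ^ 2 / (a + 1) - 8 * (a - 1) * Y ^ 2 / a)
      + (1/2) * (Y ^ 2 / a) = 9/8 * Y ^ 2 / (a * (a + 1))" if "a > 0" for a Y :: real
    using that by (simp add: divide_simps) (simp add: algebra_simps power2_eq_square)
  have "central_coeff (Suc (Suc m)) = central_coeff (Suc m) * ((real m + 2) - 1/2) / (real m + 2)"
    using central_coeff_Suc[of "Suc m"] by (simp add: algebra_simps)
  then have "(1/16) * (coeff_3 (Suc m) - coeff_3 m) + (1/2) * coeff_2 (Suc m)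
      = (1/16) * (8 * (real m + 2) * (central_coeff (Suc m) * ((real m + 2) - 1/2) / (real m + 2)) ^ 2
          / ((real m + 2) + 1) - 8 * ((real m + 2) - 1) * central_coeff (Suc m) ^ 2 / (real m + 2))
        + (1/2) * (central_coeff (Suc m) ^ 2 / (real m + 2))"
    unfolding coeff_3_def coeff_2_def by (simp add: algebra_simps)
  also have "\<dots> = 9/8 * central_coeff (Suc m) ^ 2 / ((real m + 2) * ((real m + 2) + 1))"
    by (rule combine) simp
  also have "\<dots> = coeff_u (Suc m)"
    unfolding coeff_u_def by (simp add: algebra_simps)
  finally show ?thesis
    using Suc by simp
qed

lemma u_fun_eq_pseries:
  assumes "\<bar>x\<bar> < 1"
  shows "u_fun x = pseries coeff_u x"
proof -
  define g where "g n = (if n = 0 then 0 else coeff_3 (n - 1))" for n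
  have S3: "(\<lambda>n. coeff_3 n * x ^ n) sums pseries coeff_3 x"
    by (rule pseries_sums[OF coeff_3_bound assms])
  have "(\<lambda>n. x * (coeff_3 n * x ^ n)) sums (x * pseries coeff_3 x)"
    by (rule sums_mult[OF S3])
  then have "(\<lambda>n. g (Suc n) * x ^ Suc n) sums (x * pseries coeff_3 x)"
    by (simp add: g_def algebra_simps)
  then have "(\<lambda>n. g n * x ^ n) sums (x * pseries coeff_3 x)"
    by (subst (asm) sums_Suc_iff) (simp add: g_def)
  then have "(\<lambda>n. (1/16) * (coeff_3 n * x ^ n - g n * x ^ n) + (1/2) * (coeff_2 n * x ^ n))
      sums ((1/16) * (pseries coeff_3 x - x * pseries coeff_3 x) + (1/2) * pseries coeff_2 x)"
    by (intro sums_add sums_mult sums_diff S3 pseries_sums[OF coeff_2_bound assms])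
  moreover have "(\<lambda>n. (1/16) * (coeff_3 n * x ^ n - g n * x ^ n) + (1/2) * (coeff_2 n * x ^ n))
      = (\<lambda>n. coeff_u n * x ^ n)"
  proof
    fix n
    have "(1/16) * (coeff_3 n * x ^ n - g n * x ^ n) + (1/2) * (coeff_2 n * x ^ n)
        = ((1/16) * (coeff_3 n - g n) + (1/2) * coeff_2 n) * x ^ n"
      by (simp add: left_diff_distrib distrib_right)
    then show "(1/16) * (coeff_3 n * x ^ n - g n * x ^ n) + (1/2) * (coeff_2 n * x ^ n) = coeff_u n * x ^ n"
      unfolding coeff_u_eq[of n] g_def by simp
  qed
  ultimately have "(\<lambda>n. coeff_u n * x ^ n)
      sums ((1/16) * (pseries coeff_3 x - x * pseries coeff_3 x) + (1/2) * pseries coeff_2 x)"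
    by simp
  then have "pseries coeff_u x = (1/16) * (pseries coeff_3 x - x * pseries coeff_3 x) + (1/2) * pseries coeff_2 x"
    by (rule sums_unique2[OF pseries_sums[OF coeff_u_bound assms]])
  then show ?thesis
    unfolding u_fun_def hyp2F1_three_halves hyp2F1_half_half_2 by (simp add: field_simps)
qed

lemma central_coeff_Suc_sq:
  "central_coeff (Suc N) ^ 2 = central_coeff N ^ 2 * ((real N + 1 - 1/2) / (real N + 1)) ^ 2"
proof -
  have "central_coeff (Suc N) = central_coeff N * ((real N + 1 - 1/2) / (real N + 1))"
    by (simp add: central_coeff_Suc)
  then show ?thesis
    by (simp only: power_mult_distrib)
qed

lemma sum_coeff_u_partial:
  "(\<Sum>n<N. coeff_u n) = real N * (4 * real N + 5) / (2 * (real N + 1)) * central_coeff N ^ 2"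
proof (induction N)
  case (Suc N)
  have step: "(a - 1) * (4 * (a - 1) + 5) / (2 * a) * X + 9/8 * X / (a * (a + 1))
      = a * (4 * a + 5) / (2 * (a + 1)) * (X * ((a - 1/2) / a) ^ 2)" if "a > 0" for a X :: real
    using that by (simp add: divide_simps) (simp add: algebra_simps power2_eq_square)
  have "(\<Sum>n<Suc N. coeff_u n) = ((real N + 1) - 1) * (4 * ((real N + 1) - 1) + 5) / (2 * (real N + 1))
      * central_coeff N ^ 2 + 9/8 * central_coeff N ^ 2 / ((real N + 1) * ((real N + 1) + 1))"
    using Suc by (simp add: coeff_u_def algebra_simps)
  also have "\<dots> = (real N + 1) * (4 * (real N + 1) + 5) / (2 * ((real N + 1) + 1))
      * (central_coeff N ^ 2 * (((real N + 1) - 1/2) / (real N + 1)) ^ 2)"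
    by (rule step) simp
  also have "\<dots> = real (Suc N) * (4 * real (Suc N) + 5) / (2 * (real (Suc N) + 1)) * central_coeff (Suc N) ^ 2"
    unfolding central_coeff_Suc_sq by simp
  finally show ?case .
qed simp

lemma sums_coeff_u: "coeff_u sums (2 / pi)"
proof -
  have "(\<lambda>N. ((4 * real N + 5) / (2 * (real N + 1))) * (real N * central_coeff N ^ 2)) \<longlonglongrightarrow> 2 * (1 / pi)"
    by (intro tendsto_mult tendsto_central_coeff_sq) real_asymp
  then show ?thesis
    unfolding sums_def sum_coeff_u_partial by (simp add: algebra_simps)
qed

lemma sum_coeff_2_partial: "(\<Sum>n<N. coeff_2 n) = 4 * real N * central_coeff N ^ 2"
proof (induction N)
  case (Suc N)
  have step: "4 * (a - 1) * X + X / a = 4 * a * (X * ((a - 1/2) / a) ^ 2)" if "a \<noteq> 0" for a X :: real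
    using that by (simp add: divide_simps) (simp add: algebra_simps power2_eq_square)
  have "(\<Sum>n<Suc N. coeff_2 n) = 4 * ((real N + 1) - 1) * central_coeff N ^ 2 + central_coeff N ^ 2 / (real N + 1)"
    using Suc by (simp add: coeff_2_def)
  also have "\<dots> = 4 * (real N + 1) * (central_coeff N ^ 2 * (((real N + 1) - 1/2) / (real N + 1)) ^ 2)"
    by (rule step) simp
  also have "\<dots> = 4 * real (Suc N) * central_coeff (Suc N) ^ 2"
    unfolding central_coeff_Suc_sq by simp
  finally show ?case .
qed simp

lemma sums_coeff_2: "coeff_2 sums (4 / pi)"
proof -
  have "(\<lambda>N. 4 * (real N * central_coeff N ^ 2)) \<longlonglongrightarrow> 4 * (1 / pi)"
    by (intro tendsto_mult tendsto_central_coeff_sq tendsto_const)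
  then show ?thesis
    unfolding sums_def sum_coeff_2_partial by (simp add: algebra_simps)
qed

section \<open>The function \<open>u\<close>\<close>

lemma u_fun_strict_mono:
  assumes "0 \<le> x" "x < y" "y < 1"
  shows "u_fun x < u_fun y"
  using pseries_strict_mono[OF _ coeff_u_bound coeff_u_pos assms] coeff_u_pos
    u_fun_eq_pseries[of x] u_fun_eq_pseries[of y] assms by (simp add: less_imp_le)

lemma u_fun_0: "u_fun 0 = 9/16"
  using u_fun_eq_pseries[of 0] by (simp add: coeff_u_def)

lemma u_fun_less: "0 \<le> x \<Longrightarrow> x < 1 \<Longrightarrow> u_fun x < 2 / pi"
  using pseries_less_sum[OF _ coeff_u_bound coeff_u_pos _ _ sums_coeff_u] coeff_u_pos u_fun_eq_pseries[of x]
  by (simp add: less_imp_le)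

lemma u_fun_ge: "0 \<le> x \<Longrightarrow> x < 1 \<Longrightarrow> 9/16 \<le> u_fun x"
  using u_fun_strict_mono[of 0 x] u_fun_0 by (cases "x = 0") auto

lemma tendsto_u_fun_at_left_1: "(u_fun \<longlongrightarrow> 2 / pi) (at_left 1)"
proof (rule Lim_transform_eventually)
  show "(pseries coeff_u \<longlongrightarrow> 2 / pi) (at_left 1)"
    using tendsto_pseries_at_left_1[OF _ sums_coeff_u] coeff_u_pos by (simp add: less_imp_le)
  show "eventually (\<lambda>x. pseries coeff_u x = u_fun x) (at_left 1)"
    using eventually_at_left_real[of 0 "1::real", OF zero_less_one] by eventually_elim (simp add: u_fun_eq_pseries)
qed

lemma at_left_1_witness:
  assumes "eventually P (at_left (1::real))"
  obtains t where "0 < t" "t < 1" "P t"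
proof -
  have "eventually (\<lambda>x. P x \<and> x \<in> {0<..<1}) (at_left (1::real))"
    using assms eventually_at_left_real[of 0 "1::real", OF zero_less_one] by eventually_elim auto
  then show ?thesis
    using eventually_happens'[of "at_left (1::real)"] that by force
qed

lemma u_fun_image: "u_fun ` {0..<1} = {9/16..<2 / pi}"
proof
  show "u_fun ` {0..<1} \<subseteq> {9/16..<2 / pi}"
    using u_fun_ge u_fun_less by auto
  show "{9/16..<2 / pi} \<subseteq> u_fun ` {0..<1}"
  proof
    fix y assume y: "y \<in> {9/16..<2 / pi}"
    then have "eventually (\<lambda>x. y < u_fun x) (at_left 1)"
      using order_tendstoD(1)[OF tendsto_u_fun_at_left_1] by simp
    then obtain t where t: "0 < t" "t < 1" "y < u_fun t"
      by (rule at_left_1_witness)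
    have "continuous_on {0..1} (pseries coeff_u)"
      by (rule continuous_on_pseries_Icc[OF less_imp_le[OF coeff_u_pos] sums_summable[OF sums_coeff_u]])
    then have "continuous_on {0..t} (pseries coeff_u)"
      by (rule continuous_on_subset) (use t in auto)
    moreover have "pseries coeff_u 0 \<le> y" "y \<le> pseries coeff_u t"
      using y t u_fun_eq_pseries[of t] by (simp_all add: coeff_u_def)
    ultimately obtain x where "0 \<le> x" "x \<le> t" "pseries coeff_u x = y"
      using IVT'[of "pseries coeff_u" 0 y t] t by auto
    then show "y \<in> u_fun ` {0..<1}"
      using t u_fun_eq_pseries[of x] by force
  qed
qed

section \<open>The logarithmic singularity of \<open>\<^sub>2F\<^sub>1(1/2, 1/2; 1; x)\<close>\<close>

lemma pseries_coeff_1_log: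
  assumes "0 \<le> x" "x < 1"
  shows "pseries coeff_1 x + ln (1 - x) / pi = 1 - pseries log_defect x"
proof -
  have x: "\<bar>x\<bar> < 1"
    using assms by simp
  have "(\<lambda>n. - ((- (- x)) ^ n) / of_nat n) sums ln (1 + (- x))"
    by (rule ln_series') (use x in simp)
  then have "(\<lambda>n. x ^ n / real n) sums (- ln (1 - x))"
    using sums_minus by fastforce
  then have "(\<lambda>n. (1 / pi) * (x ^ n / real n) - coeff_1 n * x ^ n + (if n = 0 then 1 else 0))
      sums ((1 / pi) * (- ln (1 - x)) - pseries coeff_1 x + 1)"
    by (intro sums_add sums_diff sums_mult pseries_sums[OF coeff_1_bound x]
        sums_single[of 0 "\<lambda>_. 1::real", simplified])
  moreover have "(\<lambda>n. (1 / pi) * (x ^ n / real n) - coeff_1 n * x ^ n + (if n = 0 then 1 else 0))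
      = (\<lambda>n. log_defect n * x ^ n)"
    by (rule ext) (simp add: log_defect_def coeff_1_def field_simps)
  ultimately have "pseries log_defect x = (1 / pi) * (- ln (1 - x)) - pseries coeff_1 x + 1"
    using sums_unique2[OF pseries_sums[OF log_defect_bound x]] by simp
  then show ?thesis
    by (simp add: field_simps)
qed

lemma tendsto_pseries_coeff_1_log:
  "((\<lambda>x. pseries coeff_1 x + ln (1 - x) / pi) \<longlongrightarrow> 4 * ln 2 / pi) (at_left 1)"
proof (rule Lim_transform_eventually)
  have "(pseries log_defect \<longlongrightarrow> 1 - 4 * ln 2 / pi) (at_left 1)"
    using tendsto_pseries_at_left_1[OF log_defect_nonneg summable_sums[OF summable_log_defect]]
    by (simp add: suminf_log_defect)
  then show "((\<lambda>x. 1 - pseries log_defect x) \<longlongrightarrow> 4 * ln 2 / pi) (at_left 1)"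
    by (auto intro!: tendsto_eq_intros)
  show "eventually (\<lambda>x. 1 - pseries log_defect x = pseries coeff_1 x + ln (1 - x) / pi) (at_left 1)"
    using eventually_at_left_real[of 0 "1::real", OF zero_less_one]
    by eventually_elim (simp add: pseries_coeff_1_log)
qed

lemma pseries_coeff_1_le:
  assumes "0 \<le> x" "x < 1"
  shows "pseries coeff_1 x \<le> 1 - ln (1 - x) / pi"
proof -
  have "log_defect 0 \<le> pseries log_defect x"
    by (rule pseries_ge_coeff_0[OF log_defect_nonneg log_defect_bound assms])
  then show ?thesis
    using pseries_coeff_1_log[OF assms] by (simp add: log_defect_def)
qed

lemma pseries_coeff_1_ge_1:
  assumes "0 \<le> x" "x < 1"
  shows "1 \<le> pseries coeff_1 x"
  using pseries_ge_coeff_0[where c = coeff_1, OF coeff_1_nonneg coeff_1_bound assms] by (simp add: coeff_1_def)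

lemma filterlim_pseries_coeff_1: "filterlim (pseries coeff_1) at_top (at_left 1)"
proof -
  have "filterlim (\<lambda>x::real. - ln (1 - x) / pi) at_top (at_left 1)"
    by real_asymp
  then have "filterlim (\<lambda>x. (pseries coeff_1 x + ln (1 - x) / pi) + (- ln (1 - x) / pi)) at_top (at_left 1)"
    by (rule filterlim_tendsto_add_at_top[OF tendsto_pseries_coeff_1_log])
  then show ?thesis
    by simp
qed

section \<open>The discriminant \<open>\<Delta>\<close>\<close>

lemma v_fun_eq: "v_fun x = 1/2 * pseries coeff_2 x + pseries coeff_1 x"
  unfolding v_fun_def hyp2F1_half_half_1 hyp2F1_half_half_2 ..

lemma Delta_fun_eq: "Delta_fun x = v_fun x ^ 2 - 4 * u_fun x * pseries coeff_1 x"
  unfolding Delta_fun_def hyp2F1_half_half_1 ..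

lemma v_fun_eq_pseries:
  assumes "\<bar>x\<bar> < 1"
  shows "v_fun x = pseries coeff_v x"
proof -
  have "(\<lambda>n. coeff_1 n * x ^ n + (1/2) * (coeff_2 n * x ^ n)) sums (pseries coeff_1 x + (1/2) * pseries coeff_2 x)"
    by (intro sums_add sums_mult pseries_sums[OF coeff_1_bound assms] pseries_sums[OF coeff_2_bound assms])
  moreover have "(\<lambda>n. coeff_1 n * x ^ n + (1/2) * (coeff_2 n * x ^ n)) = (\<lambda>n. coeff_v n * x ^ n)"
    by (rule ext) (simp add: coeff_v_def distrib_right)
  ultimately have "pseries coeff_v x = pseries coeff_1 x + (1/2) * pseries coeff_2 x"
    using sums_unique2[OF pseries_sums[OF coeff_v_bound assms]] by simp
  then show ?thesis
    by (simp add: v_fun_eq)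
qed

lemma isCont_u_fun: "\<bar>x\<bar> < 1 \<Longrightarrow> isCont u_fun x"
  unfolding u_fun_def hyp2F1_three_halves hyp2F1_half_half_2
  by (intro continuous_intros isCont_pseries[OF coeff_2_bound] isCont_pseries[OF coeff_3_bound])

lemma isCont_v_fun: "\<bar>x\<bar> < 1 \<Longrightarrow> isCont v_fun x"
  unfolding v_fun_def hyp2F1_half_half_1 hyp2F1_half_half_2
  by (intro continuous_intros isCont_pseries[OF coeff_1_bound] isCont_pseries[OF coeff_2_bound])

lemma isCont_Delta_fun: "\<bar>x\<bar> < 1 \<Longrightarrow> isCont Delta_fun x"
  unfolding Delta_fun_def hyp2F1_half_half_1
  by (intro continuous_intros isCont_pseries[OF coeff_1_bound] isCont_u_fun isCont_v_fun)

lemma v_fun_0: "v_fun 0 = 3/2"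
  by (simp add: v_fun_eq coeff_1_def coeff_2_def)

lemma Delta_fun_0: "Delta_fun 0 = 0"
  by (simp add: Delta_fun_eq v_fun_0 u_fun_0 coeff_1_def power2_eq_square)

lemma pseries_coeff_1_le_v_fun: "0 \<le> x \<Longrightarrow> x < 1 \<Longrightarrow> pseries coeff_1 x \<le> v_fun x"
  using pseries_ge_coeff_0[where c = coeff_2, OF coeff_2_nonneg coeff_2_bound, of x]
  by (simp add: v_fun_eq coeff_2_def)

text \<open>Expanding \<open>v\<^sup>2 - 4 u \<^sub>2F\<^sub>1(1/2, 1/2; 1; x)\<close> as a double power series, with the cross
  term split symmetrically, gives nonnegative coefficients.\<close>

definition Delta_coeff :: "nat \<Rightarrow> nat \<Rightarrow> real" where
  "Delta_coeff i j = coeff_v i * coeff_v j - 2 * coeff_u i * coeff_1 j - 2 * coeff_1 i * coeff_u j"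

definition Delta_row :: "real \<Rightarrow> nat \<Rightarrow> real" where
  "Delta_row x i = x ^ i * (coeff_v i * pseries coeff_v x - 2 * coeff_u i * pseries coeff_1 x
     - 2 * coeff_1 i * pseries coeff_u x)"

lemma sums_Delta_row:
  assumes "0 \<le> x" "x < 1"
  shows "Delta_row x sums Delta_fun x"
proof -
  have x: "\<bar>x\<bar> < 1"
    using assms by simp
  let ?V = "pseries coeff_v x" and ?F = "pseries coeff_1 x" and ?U = "pseries coeff_u x"
  have "(\<lambda>i. (coeff_v i * x ^ i) * ?V - (coeff_u i * x ^ i) * (2 * ?F) - (coeff_1 i * x ^ i) * (2 * ?U))
      sums (?V * ?V - ?U * (2 * ?F) - ?F * (2 * ?U))"
    by (intro sums_diff sums_mult2 pseries_sums[OF coeff_v_bound x] pseries_sums[OF coeff_u_bound x]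
        pseries_sums[OF coeff_1_bound x])
  moreover have "?V * ?V - ?U * (2 * ?F) - ?F * (2 * ?U) = Delta_fun x"
    unfolding Delta_fun_eq v_fun_eq_pseries[OF x] u_fun_eq_pseries[OF x]
    by (simp add: power2_eq_square algebra_simps)
  moreover have "(\<lambda>i. (coeff_v i * x ^ i) * ?V - (coeff_u i * x ^ i) * (2 * ?F) - (coeff_1 i * x ^ i) * (2 * ?U))
      = Delta_row x"
    by (rule ext) (simp add: Delta_row_def algebra_simps)
  ultimately show ?thesis
    by simp
qed

lemma Delta_row_sums:
  assumes "0 \<le> x" "x < 1"
  shows "(\<lambda>j. Delta_coeff i j * (x ^ i * x ^ j)) sums Delta_row x i"
proof -
  have x: "\<bar>x\<bar> < 1"
    using assms by simp
  have "(\<lambda>j. x ^ i * (coeff_v i * (coeff_v j * x ^ j) - 2 * coeff_u i * (coeff_1 j * x ^ j)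
      - 2 * coeff_1 i * (coeff_u j * x ^ j))) sums Delta_row x i"
    unfolding Delta_row_def
    by (intro sums_mult sums_diff pseries_sums[OF coeff_v_bound x] pseries_sums[OF coeff_1_bound x]
        pseries_sums[OF coeff_u_bound x])
  then show ?thesis
    by (simp add: Delta_coeff_def algebra_simps)
qed

lemma Delta_coeff_nonneg: "0 \<le> Delta_coeff i j"
proof -
  define p where "p = 1 / (real i + 1)"
  define q where "q = 1 / (real j + 1)"
  have p: "0 < p" "p \<le> 1" and q: "0 < q" "q \<le> 1"
    by (simp_all add: p_def q_def field_simps)
  have half: "r ^ 2 / (1 + r) \<le> r / 2" if "0 < r" "r \<le> 1" for r :: real
  proof -
    have "r ^ 2 * 2 \<le> r * (1 + r)"
      using that by (simp add: power2_eq_square algebra_simps mult_left_mono)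
    then show ?thesis
      using that by (simp add: divide_simps)
  qed
  define P where "P = p ^ 2 / (1 + p)"
  define Q where "Q = q ^ 2 / (1 + q)"
  have v: "coeff_v i = coeff_1 i * (1 + p / 2)" "coeff_v j = coeff_1 j * (1 + q / 2)"
    by (simp_all add: coeff_v_def coeff_1_def coeff_2_def p_def q_def field_simps)
  have u: "coeff_u i = 9/8 * coeff_1 i * P" "coeff_u j = 9/8 * coeff_1 j * Q"
    by (simp_all add: coeff_u_def coeff_1_def P_def Q_def p_def q_def divide_simps power2_eq_square)
  have "Delta_coeff i j = coeff_1 i * (1 + p / 2) * (coeff_1 j * (1 + q / 2))
      - 2 * (9/8 * coeff_1 i * P) * coeff_1 j - 2 * coeff_1 i * (9/8 * coeff_1 j * Q)"
    unfolding Delta_coeff_def v u ..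
  also have "\<dots> = coeff_1 i * coeff_1 j * ((1 + p / 2) * (1 + q / 2) - 9/4 * P - 9/4 * Q)"
    by (simp add: algebra_simps)
  finally have eq: "Delta_coeff i j = coeff_1 i * coeff_1 j * ((1 + p / 2) * (1 + q / 2) - 9/4 * P - 9/4 * Q)" .
  have "0 \<le> (1 - p) * (1 - q) + 3/8 * (p * (1 - q)) + 3/8 * ((1 - p) * q)"
    using p q by (intro add_nonneg_nonneg mult_nonneg_nonneg) auto
  also have "\<dots> = (1 + p / 2) * (1 + q / 2) - 9/4 * (p / 2) - 9/4 * (q / 2)"
    by (simp add: field_simps)
  also have "\<dots> \<le> (1 + p / 2) * (1 + q / 2) - 9/4 * P - 9/4 * Q"
    using half[OF p] half[OF q] unfolding P_def Q_def by linarith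
  finally show ?thesis
    unfolding eq using coeff_1_nonneg[of i] coeff_1_nonneg[of j] by simp
qed

lemma Delta_coeff_0_1: "Delta_coeff 0 1 > 0"
  by (simp add: Delta_coeff_def coeff_v_def coeff_1_def coeff_2_def coeff_u_def power2_eq_square)

lemma Delta_fun_strict_mono:
  assumes "0 \<le> x" "x < y" "y < 1"
  shows "Delta_fun x < Delta_fun y"
proof -
  have term_mono: "0 \<le> Delta_coeff i j * (y ^ i * y ^ j) - Delta_coeff i j * (x ^ i * x ^ j)" for i j
    using assms Delta_coeff_nonneg[of i j]
    by (simp add: mult_left_mono mult_mono power_mono flip: right_diff_distrib)
  have row_diff: "(\<lambda>j. Delta_coeff i j * (y ^ i * y ^ j) - Delta_coeff i j * (x ^ i * x ^ j))
      sums (Delta_row y i - Delta_row x i)" for i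
    using assms by (intro sums_diff Delta_row_sums) auto
  have row_mono: "Delta_row x i \<le> Delta_row y i" for i
  proof -
    have "0 \<le> (\<Sum>j. Delta_coeff i j * (y ^ i * y ^ j) - Delta_coeff i j * (x ^ i * x ^ j))"
      by (rule suminf_nonneg[OF sums_summable[OF row_diff] term_mono])
    then show ?thesis
      using row_diff[of i] by (simp add: sums_iff)
  qed
  have "Delta_row x 0 < Delta_row y 0"
  proof -
    have "0 < (\<Sum>j. Delta_coeff 0 j * (y ^ 0 * y ^ j) - Delta_coeff 0 j * (x ^ 0 * x ^ j))"
    proof (rule suminf_pos2[where i=1])
      show "0 < Delta_coeff 0 1 * (y ^ 0 * y ^ 1) - Delta_coeff 0 1 * (x ^ 0 * x ^ 1)"
        using Delta_coeff_0_1 assms by simp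
      show "summable (\<lambda>j. Delta_coeff 0 j * (y ^ 0 * y ^ j) - Delta_coeff 0 j * (x ^ 0 * x ^ j))"
        by (rule sums_summable[OF row_diff])
    qed (rule term_mono)
    then show ?thesis
      using row_diff[of 0] by (simp add: sums_iff)
  qed
  moreover have d: "(\<lambda>i. Delta_row y i - Delta_row x i) sums (Delta_fun y - Delta_fun x)"
    using assms by (intro sums_diff sums_Delta_row) auto
  ultimately have "0 < (\<Sum>i. Delta_row y i - Delta_row x i)"
    using row_mono by (intro suminf_pos2[OF sums_summable[OF d], of 0]) auto
  then show ?thesis
    using d by (simp add: sums_iff)
qed

lemma Delta_fun_pos: "0 < x \<Longrightarrow> x < 1 \<Longrightarrow> 0 < Delta_fun x"
  using Delta_fun_strict_mono[of 0 x] Delta_fun_0 by simp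

lemma Delta_fun_nonneg: "0 \<le> x \<Longrightarrow> x < 1 \<Longrightarrow> 0 \<le> Delta_fun x"
  using Delta_fun_pos[of x] Delta_fun_0 by (cases "x = 0") auto

lemma filterlim_Delta_fun: "filterlim Delta_fun at_top (at_left 1)"
proof (rule filterlim_at_top_mono[OF filterlim_pseries_coeff_1])
  have "eventually (\<lambda>x. 4 \<le> pseries coeff_1 x) (at_left 1)"
    using filterlim_pseries_coeff_1 unfolding filterlim_at_top by blast
  then show "eventually (\<lambda>x. pseries coeff_1 x \<le> Delta_fun x) (at_left 1)"
    using eventually_at_left_real[of 0 "1::real", OF zero_less_one]
  proof eventually_elim
    case (elim x)
    then have x: "0 \<le> x" "x < 1"
      by auto
    let ?F = "pseries coeff_1 x"
    have "2 / pi < 2 / 3"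
      using pi_gt3 by (simp add: field_simps)
    then have "4 * u_fun x \<le> 3"
      using u_fun_less[OF x] by linarith
    then have "4 * u_fun x * ?F \<le> 3 * ?F"
      using pseries_coeff_1_ge_1[OF x] by (intro mult_right_mono) auto
    moreover have "?F ^ 2 \<le> v_fun x ^ 2"
      using pseries_coeff_1_le_v_fun[OF x] pseries_coeff_1_ge_1[OF x] by (intro power_mono) auto
    moreover have "4 * ?F \<le> ?F * ?F"
      using elim by (intro mult_right_mono) auto
    ultimately show ?case
      unfolding Delta_fun_eq by (simp add: power2_eq_square)
  qed
qed

lemma Delta_fun_image: "Delta_fun ` {0<..<1} = {0<..}"
proof
  show "Delta_fun ` {0<..<1} \<subseteq> {0<..}"
    using Delta_fun_pos by auto
  show "{0<..} \<subseteq> Delta_fun ` {0<..<1}"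
  proof
    fix y :: real assume y: "y \<in> {0<..}"
    have "eventually (\<lambda>x. y < Delta_fun x) (at_left 1)"
      using filterlim_Delta_fun unfolding filterlim_at_top_dense by blast
    then obtain t where t: "0 < t" "t < 1" "y < Delta_fun t"
      by (rule at_left_1_witness)
    have "continuous_on {0..t} Delta_fun"
      using t by (intro continuous_at_imp_continuous_on ballI isCont_Delta_fun) auto
    then obtain x where x: "0 \<le> x" "x \<le> t" "Delta_fun x = y"
      using IVT'[of Delta_fun 0 y t] t y Delta_fun_0 by auto
    then have "x \<noteq> 0"
      using y Delta_fun_0 by auto
    then show "y \<in> Delta_fun ` {0<..<1}"
      using x t by force
  qed
qed

section \<open>The functions \<open>w\<^sub>+\<close> and \<open>w\<^sub>-\<close>\<close>

lemma u_fun_gap: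
  obtains C where "0 \<le> C" "\<And>x. 0 \<le> x \<Longrightarrow> x < 1 \<Longrightarrow> 2 / pi - u_fun x \<le> C * (1 - x)"
proof
  have bound: "\<bar>real n * coeff_u n\<bar> \<le> 9/4 * (1 / (real n + 1) ^ 2)" for n
  proof -
    have "real n * coeff_u n = 9/8 * central_coeff n ^ 2 * (real n / ((real n + 1) * (real n + 2)))"
      by (simp add: coeff_u_def field_simps)
    also have "\<dots> \<le> 9/8 * (2 / (real n + 1)) * (1 / (real n + 1))"
      using central_coeff_sq_le[of n] by (intro mult_mono) (auto simp: divide_simps)
    also have "\<dots> = 9/4 * (1 / (real n + 1) ^ 2)"
      by (simp add: power2_eq_square)
    finally show ?thesis
      using coeff_u_pos[of n] by simp
  qed
  have summable: "summable (\<lambda>n. real n * coeff_u n)"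
    by (rule summable_comparison_test[OF _ summable_mult[OF summable_inverse_Suc_sq, of "9/4"]]) (use bound in auto)
  show "0 \<le> (\<Sum>n. real n * coeff_u n)"
    using coeff_u_pos by (intro suminf_nonneg summable) (auto simp: less_imp_le)
  fix x :: real assume x: "0 \<le> x" "x < 1"
  have d: "(\<lambda>n. coeff_u n - coeff_u n * x ^ n) sums (2 / pi - u_fun x)"
    using sums_diff[OF sums_coeff_u pseries_sums[OF coeff_u_bound]] x u_fun_eq_pseries[of x] by simp
  have c: "(\<lambda>n. (1 - x) * (real n * coeff_u n)) sums ((1 - x) * (\<Sum>n. real n * coeff_u n))"
    by (rule sums_mult[OF summable_sums[OF summable]])
  have "coeff_u n - coeff_u n * x ^ n \<le> (1 - x) * (real n * coeff_u n)" for n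
  proof -
    have "1 - x ^ n \<le> real n * (1 - x)"
      using Bernoulli_inequality[of "x - 1" n] x by (simp add: algebra_simps)
    then have "coeff_u n * (1 - x ^ n) \<le> coeff_u n * (real n * (1 - x))"
      using coeff_u_pos[of n] by (intro mult_left_mono) auto
    then show ?thesis
      by (simp add: algebra_simps)
  qed
  then show "2 / pi - u_fun x \<le> (\<Sum>n. real n * coeff_u n) * (1 - x)"
    using sums_le[OF _ d c] by (simp add: mult.commute)
qed

text \<open>Rationalising the root via \<open>(v - \<surd>\<Delta>)(v + \<surd>\<Delta>) = 4 u F\<close> turns \<open>w\<^sub>+\<close> into four
  terms, each with an elementary limit at \<open>1\<close>.\<close>

lemma w_plus_split:
  assumes "0 \<le> x" "x < 1"
  defines "F \<equiv> pseries coeff_1 x"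
  shows "w_plus x = (1/2 * ln (1 - x) + pi / 2 * F) + F * (1 / u_fun x - pi / 2)
    + (pseries coeff_2 x / 2) / u_fun x - 2 * F / (v_fun x + sqrt (Delta_fun x))"
proof -
  define U V S where "U = u_fun x" and "V = v_fun x" and "S = sqrt (Delta_fun x)"
  define T where "T = V + S"
  have U: "9/16 \<le> U"
    unfolding U_def by (rule u_fun_ge[OF assms(1,2)])
  have "S * S = Delta_fun x"
    unfolding S_def using Delta_fun_nonneg[OF assms(1,2)] by simp
  then have key: "(2 * V - T) * T = 4 * U * F"
    unfolding T_def Delta_fun_eq V_def U_def F_def by (simp add: algebra_simps power2_eq_square)
  have "0 \<le> S"
    unfolding S_def using Delta_fun_nonneg[OF assms(1,2)] by simp
  then have T: "T > 0"
    using pseries_coeff_1_ge_1[OF assms(1,2)] pseries_coeff_1_le_v_fun[OF assms(1,2)]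
    unfolding T_def V_def by linarith
  have "V / U - 2 * F / T = (2 * V * T - 4 * U * F) / (2 * U * T)"
    using U T by (simp add: field_simps)
  also have "\<dots> = T / (2 * U)"
    using key T by (simp add: algebra_simps power2_eq_square)
  finally have "T / (2 * U) = V / U - 2 * F / T" ..
  moreover have "V / U = pi / 2 * F + F * (1 / U - pi / 2) + (pseries coeff_2 x / 2) / U"
    unfolding V_def v_fun_eq F_def using U by (simp add: field_simps)
  ultimately show ?thesis
    unfolding w_plus_def by (simp add: T_def U_def V_def S_def)
qed

lemma tendsto_half_ln_plus_pseries_coeff_1: "((\<lambda>x. 1/2 * ln (1 - x) + pi / 2 * pseries coeff_1 x) \<longlongrightarrow> ln 4) (at_left 1)"
proof -
  have "((\<lambda>x. pi / 2 * (pseries coeff_1 x + ln (1 - x) / pi)) \<longlongrightarrow> pi / 2 * (4 * ln 2 / pi)) (at_left 1)"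
    by (rule tendsto_mult[OF tendsto_const tendsto_pseries_coeff_1_log])
  moreover have "pi / 2 * (4 * ln 2 / pi) = ln (4::real)"
    using ln_realpow[of 2 2] by simp
  moreover have "(\<lambda>x. pi / 2 * (pseries coeff_1 x + ln (1 - x) / pi))
      = (\<lambda>x. 1/2 * ln (1 - x) + pi / 2 * pseries coeff_1 x)"
    by (rule ext) (simp add: field_simps)
  ultimately show ?thesis
    by simp
qed

lemma tendsto_pseries_coeff_1_mult_u_fun_defect: "((\<lambda>x. pseries coeff_1 x * (1 / u_fun x - pi / 2)) \<longlongrightarrow> 0) (at_left 1)"
proof -
  obtain C where C: "0 \<le> C" "\<And>x. 0 \<le> x \<Longrightarrow> x < 1 \<Longrightarrow> 2 / pi - u_fun x \<le> C * (1 - x)"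
    using u_fun_gap by blast
  let ?h = "\<lambda>x. (1 - ln (1 - x) / pi) * (1 - x) * (8 * pi / 9 * C)"
  show ?thesis
  proof (rule tendsto_sandwich[where f = "\<lambda>_. 0" and h = ?h])
    show "eventually (\<lambda>x. 0 \<le> pseries coeff_1 x * (1 / u_fun x - pi / 2)) (at_left 1)"
      using eventually_at_left_real[of 0 "1::real", OF zero_less_one]
    proof eventually_elim
      case (elim x)
      then have x: "0 \<le> x" "x < 1"
        by auto
      have "pi / 2 \<le> 1 / u_fun x"
        using u_fun_less[OF x] u_fun_ge[OF x] by (simp add: field_simps)
      then show ?case
        using pseries_coeff_1_ge_1[OF x] by simp
    qed
    show "eventually (\<lambda>x. pseries coeff_1 x * (1 / u_fun x - pi / 2) \<le> ?h x) (at_left 1)"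
      using eventually_at_left_real[of 0 "1::real", OF zero_less_one]
    proof eventually_elim
      case (elim x)
      then have x: "0 \<le> x" "x < 1"
        by auto
      have U: "9/16 \<le> u_fun x" "u_fun x < 2 / pi"
        using u_fun_ge[OF x] u_fun_less[OF x] by auto
      have "1 / u_fun x - pi / 2 = pi / (2 * u_fun x) * (2 / pi - u_fun x)"
        using U by (simp add: field_simps)
      also have "\<dots> \<le> 8 * pi / 9 * (C * (1 - x))"
      proof (rule mult_mono)
        show "pi / (2 * u_fun x) \<le> 8 * pi / 9"
          using U by (simp add: field_simps)
      qed (use U C(2)[OF x] in auto)
      finally have "pseries coeff_1 x * (1 / u_fun x - pi / 2) \<le> pseries coeff_1 x * (8 * pi / 9 * (C * (1 - x)))"
        using pseries_coeff_1_ge_1[OF x] by (intro mult_left_mono) auto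
      also have "\<dots> \<le> (1 - ln (1 - x) / pi) * (8 * pi / 9 * (C * (1 - x)))"
        using pseries_coeff_1_le[OF x] C(1) x by (intro mult_right_mono) auto
      also have "\<dots> = ?h x"
        by (simp only: mult_ac)
      finally show ?case .
    qed
    have "((\<lambda>x::real. (1 - ln (1 - x) / pi) * (1 - x)) \<longlongrightarrow> 0) (at_left 1)"
      by real_asymp
    then show "(?h \<longlongrightarrow> 0) (at_left 1)"
      by (rule tendsto_mult_left_zero)
  qed simp
qed

lemma tendsto_pseries_coeff_2_div_u_fun: "((\<lambda>x. (pseries coeff_2 x / 2) / u_fun x) \<longlongrightarrow> 1) (at_left 1)"
proof -
  have "(pseries coeff_2 \<longlongrightarrow> 4 / pi) (at_left 1)"
    by (rule tendsto_pseries_at_left_1[OF coeff_2_nonneg sums_coeff_2])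
  then have "((\<lambda>x. (pseries coeff_2 x / 2) / u_fun x) \<longlongrightarrow> ((4 / pi) / 2) / (2 / pi)) (at_left 1)"
    by (intro tendsto_divide tendsto_intros tendsto_u_fun_at_left_1) auto
  then show ?thesis
    by simp
qed

lemma tendsto_pseries_coeff_1_div_root_sum:
  "((\<lambda>x. 2 * pseries coeff_1 x / (v_fun x + sqrt (Delta_fun x))) \<longlongrightarrow> 1) (at_left 1)"
proof -
  define iF where "iF x = inverse (pseries coeff_1 x)" for x
  define W where "W x = 1 + 1/2 * (pseries coeff_2 x * iF x)" for x
  have iF: "(iF \<longlongrightarrow> 0) (at_left 1)"
    unfolding iF_def[abs_def] by (rule tendsto_inverse_0_at_top[OF filterlim_pseries_coeff_1])
  have "(W \<longlongrightarrow> 1 + 1/2 * (4 / pi * 0)) (at_left 1)"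
    unfolding W_def[abs_def]
    by (intro tendsto_intros tendsto_pseries_at_left_1[OF coeff_2_nonneg sums_coeff_2] iF)
  then have "(W \<longlongrightarrow> 1) (at_left 1)"
    by simp
  then have "((\<lambda>x. W x + sqrt (W x ^ 2 - 4 * u_fun x * iF x)) \<longlongrightarrow> 1 + sqrt (1 ^ 2 - 4 * (2 / pi) * 0)) (at_left 1)"
    by (intro tendsto_intros tendsto_u_fun_at_left_1 iF) simp
  then have "((\<lambda>x. 2 / (W x + sqrt (W x ^ 2 - 4 * u_fun x * iF x))) \<longlongrightarrow> 2 / 2) (at_left 1)"
    by (intro tendsto_divide tendsto_const) simp_all
  moreover have "eventually (\<lambda>x. 2 / (W x + sqrt (W x ^ 2 - 4 * u_fun x * iF x))
      = 2 * pseries coeff_1 x / (v_fun x + sqrt (Delta_fun x))) (at_left 1)"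
    using eventually_at_left_real[of 0 "1::real", OF zero_less_one]
  proof eventually_elim
    case (elim x)
    define F where "F = pseries coeff_1 x"
    have F: "1 \<le> F"
      unfolding F_def using elim by (intro pseries_coeff_1_ge_1) auto
    have W: "W x = v_fun x / F"
      unfolding W_def iF_def v_fun_eq F_def[symmetric] using F by (simp add: field_simps)
    have "W x ^ 2 - 4 * u_fun x * iF x = Delta_fun x / F ^ 2"
      unfolding W iF_def Delta_fun_eq F_def[symmetric] using F by (simp add: field_simps power2_eq_square)
    then have "2 / (W x + sqrt (W x ^ 2 - 4 * u_fun x * iF x)) = 2 / (v_fun x / F + sqrt (Delta_fun x) / F)"
      using F by (simp add: W real_sqrt_divide)
    also have "\<dots> = 2 * F / (v_fun x + sqrt (Delta_fun x))"
      using F by (simp add: field_simps add_divide_distrib[symmetric])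
    finally show ?case
      unfolding F_def .
  qed
  ultimately show ?thesis
    using Lim_transform_eventually by fastforce
qed

lemma tendsto_w_plus_at_left_1: "(w_plus \<longlongrightarrow> ln 4) (at_left 1)"
proof (rule Lim_transform_eventually)
  have "((\<lambda>x. (1/2 * ln (1 - x) + pi / 2 * pseries coeff_1 x)
      + pseries coeff_1 x * (1 / u_fun x - pi / 2) + (pseries coeff_2 x / 2) / u_fun x
      - 2 * pseries coeff_1 x / (v_fun x + sqrt (Delta_fun x))) \<longlongrightarrow> ln 4 + 0 + 1 - 1) (at_left 1)"
    by (intro tendsto_diff tendsto_add tendsto_half_ln_plus_pseries_coeff_1 tendsto_pseries_coeff_1_mult_u_fun_defect
        tendsto_pseries_coeff_2_div_u_fun tendsto_pseries_coeff_1_div_root_sum)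
  then show "((\<lambda>x. (1/2 * ln (1 - x) + pi / 2 * pseries coeff_1 x)
      + pseries coeff_1 x * (1 / u_fun x - pi / 2) + (pseries coeff_2 x / 2) / u_fun x
      - 2 * pseries coeff_1 x / (v_fun x + sqrt (Delta_fun x))) \<longlongrightarrow> ln 4) (at_left 1)"
    by simp
  show "eventually (\<lambda>x. (1/2 * ln (1 - x) + pi / 2 * pseries coeff_1 x)
      + pseries coeff_1 x * (1 / u_fun x - pi / 2) + (pseries coeff_2 x / 2) / u_fun x
      - 2 * pseries coeff_1 x / (v_fun x + sqrt (Delta_fun x)) = w_plus x) (at_left 1)"
    using eventually_at_left_real[of 0 "1::real", OF zero_less_one]
    by eventually_elim (simp add: w_plus_split)
qed

lemma isCont_w_plus: "0 \<le> x \<Longrightarrow> x < 1 \<Longrightarrow> isCont w_plus x"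
  unfolding w_plus_def using u_fun_ge[of x]
  by (intro continuous_intros isCont_u_fun isCont_v_fun isCont_Delta_fun) auto

lemma isCont_w_minus: "0 \<le> x \<Longrightarrow> x < 1 \<Longrightarrow> isCont w_minus x"
  unfolding w_minus_def using u_fun_ge[of x]
  by (intro continuous_intros isCont_u_fun isCont_v_fun isCont_Delta_fun) auto

lemma w_plus_0: "w_plus 0 = 4/3"
  by (simp add: w_plus_def v_fun_0 u_fun_0 Delta_fun_0)

lemma w_minus_0: "w_minus 0 = 4/3"
  by (simp add: w_minus_def v_fun_0 u_fun_0 Delta_fun_0)

lemma w_minus_le:
  assumes "0 \<le> x" "x < 1"
  shows "w_minus x \<le> 1/2 * ln (1 - x) + 2"
proof -
  define F U V S where "F = pseries coeff_1 x" and "U = u_fun x" and "V = v_fun x"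
    and "S = sqrt (Delta_fun x)"
  have F: "1 \<le> F" and U: "9/16 \<le> U"
    unfolding F_def U_def using pseries_coeff_1_ge_1[OF assms] u_fun_ge[OF assms] by auto
  have "0 \<le> S"
    unfolding S_def using Delta_fun_nonneg[OF assms] by simp
  then have T: "F \<le> V + S"
    unfolding F_def V_def using pseries_coeff_1_le_v_fun[OF assms] by simp
  have "S * S = Delta_fun x"
    unfolding S_def using Delta_fun_nonneg[OF assms] by simp
  then have "(V - S) * (V + S) = 4 * U * F"
    unfolding Delta_fun_eq V_def U_def F_def by (simp add: algebra_simps power2_eq_square)
  then have "V - S = 4 * U * F / (V + S)"
    using T F by (simp add: eq_divide_eq)
  also have "\<dots> \<le> 4 * U * F / F"
    using T F U by (intro divide_left_mono) auto
  finally have "(V - S) / (2 * U) \<le> 2"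
    using F U by (simp add: divide_simps)
  then show ?thesis
    by (simp add: w_minus_def F_def U_def V_def S_def)
qed

lemma filterlim_w_minus: "filterlim w_minus at_bot (at_left 1)"
proof (rule filterlim_at_bot_mono)
  show "filterlim (\<lambda>x::real. 1/2 * ln (1 - x) + 2) at_bot (at_left 1)"
    by real_asymp
  show "eventually (\<lambda>x. w_minus x \<le> 1/2 * ln (1 - x) + 2) (at_left 1)"
    using eventually_at_left_real[of 0 "1::real", OF zero_less_one]
    by eventually_elim (rule w_minus_le; simp)
qed

lemma w_plus_extension:
  defines "W \<equiv> \<lambda>x. if x < 1 then w_plus x else ln 4"
  shows "continuous_on {0..1} W"
proof (rule continuous_on_IccI)
  have "eventually (\<lambda>x. w_plus x = W x) (at_right 0)"
    using eventually_at_right_real[of 0 "1::real", OF zero_less_one]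
    by eventually_elim (simp add: W_def)
  then show "(W \<longlongrightarrow> W 0) (at_right 0)"
    using Lim_transform_eventually isCont_w_plus[of 0]
    by (fastforce simp: W_def isCont_def filterlim_at_split)
  have "eventually (\<lambda>x. w_plus x = W x) (at_left 1)"
    using eventually_at_left_real[of 0 "1::real", OF zero_less_one]
    by eventually_elim (simp add: W_def)
  then show "(W \<longlongrightarrow> W 1) (at_left 1)"
    using Lim_transform_eventually[OF tendsto_w_plus_at_left_1] by (simp add: W_def)
  fix x :: real assume x: "0 < x" "x < 1"
  have "eventually (\<lambda>y. w_plus y = W y) (nhds x)"
    using eventually_nhds_in_open[of "{..<1}" x] x by (auto elim!: eventually_mono simp: W_def)
  then have "isCont W x"
    using isCont_cong isCont_w_plus[of x] x by fastforce
  then show "(W \<longlongrightarrow> W x) (at x)"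
    by (simp add: isCont_def)
qed simp

theorem mainTheorem11:
  shows "(strict_mono_on {0..<1} u_fun \<and> u_fun ` {0..<1} = {9/16..<2/pi})
    \<and> (strict_mono_on {0<..<1} Delta_fun \<and> Delta_fun ` {0<..<1} = {0<..})
    \<and> (\<exists>W :: real \<Rightarrow> real. continuous_on {0..1} W
          \<and> (\<forall>x\<in>{0..<1}. W x = w_plus x)
          \<and> W 0 = 4/3 \<and> W 1 = ln 4
          \<and> (\<exists>a_c. a_c \<in> W ` {0..1} \<and> (\<forall>x\<in>{0..1}. W x \<le> a_c) \<and> a_c \<ge> ln 4))
    \<and> (continuous_on {0..<1} w_minus \<and> w_minus 0 = 4/3
          \<and> filterlim w_minus at_bot (at_left 1))"
proof (intro conjI)
  show "strict_mono_on {0..<1} u_fun"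
    using u_fun_strict_mono by (auto simp: strict_mono_on_def)
  show "strict_mono_on {0<..<1} Delta_fun"
    using Delta_fun_strict_mono by (auto simp: strict_mono_on_def)
  show "continuous_on {0..<1} w_minus"
    by (intro continuous_at_imp_continuous_on ballI isCont_w_minus) auto
  define W where "W x = (if x < 1 then w_plus x else ln 4)" for x :: real
  have cont: "continuous_on {0..1} W"
    using w_plus_extension unfolding W_def .
  obtain m where m: "m \<in> {0..1}" "\<And>y. y \<in> {0..1} \<Longrightarrow> W y \<le> W m"
    using continuous_attains_sup[OF compact_Icc _ cont] by auto
  have "W 0 = 4/3" "W 1 = ln 4" "\<forall>x\<in>{0..<1}. W x = w_plus x"
    by (simp_all add: W_def w_plus_0)
  moreover have "ln 4 \<le> W m"
    using m(2)[of 1] \<open>W 1 = ln 4\<close> by simp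
  ultimately show "\<exists>W :: real \<Rightarrow> real. continuous_on {0..1} W \<and> (\<forall>x\<in>{0..<1}. W x = w_plus x)
      \<and> W 0 = 4/3 \<and> W 1 = ln 4
      \<and> (\<exists>a_c. a_c \<in> W ` {0..1} \<and> (\<forall>x\<in>{0..1}. W x \<le> a_c) \<and> a_c \<ge> ln 4)"
    using cont m by blast
qed (fact u_fun_image Delta_fun_image w_minus_0 filterlim_w_minus)+
end
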